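(* Let $\mathfrak m$ be a smooth function on $\mathbb R^n\setminus\{0\}$ such that for every multi-index $\alpha$ there exist $L_1^\alpha,L_2^\alpha\ge0$ and $C_\alpha$ with $|\partial^\alpha\mathfrak m(\xi)|\le C_\alpha\max\{|\xi|^{-L_1^\alpha},|\xi|^{L_2^\alpha}\}$ for all $\xi\ne0$. Then: (i) for every $g\in\mathcal S_{00}(\mathbb R^n)$, the function $\mathfrak m g$ (defined to be $0$ at $\xi=0$) belongs to $\mathcal S_{00}(\mathbb R^n)$; (ii) for every tempered distribution $f\in\mathcal S'(\mathbb R^n)$, the linear functional $g\mapsto\langle f,\mathfrak m g\rangle$ on $\mathcal S_{00}(\mathbb R^n)$ is bounded in the topology of $\mathcal S(\mathbb R^n)$, i.e. $|\langle f,\mathfrak mg\rangle|$ is bounded by a constant times a finite sum of Schwartz seminorms of $g$; consequently it extends to a tempered distribution on $\mathcal S(\mathbb R^n)$.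
   Context: $\mathcal S_{00}(\mathbb R^n)=\{g\in\mathcal S(\mathbb R^n):\partial^\gamma g(0)=0\text{ for all multi-indices }\gamma\}$, with the topology inherited from $\mathcal S(\mathbb R^n)$. *)

theory Defs
  imports "HOL-Analysis.Analysis"
begin

text \<open>Functions on R^n are modelled as functions on the Euclidean space real^'n
  (with 'n an arbitrary finite index type, n = CARD('n)), with complex values.
  A multi-index is encoded as a finite list of coordinate directions; the
  derivative along the list applies the partial derivatives one after another.\<close>

definition partial_dir :: "'n::finite \<Rightarrow> (real^'n \<Rightarrow> complex) \<Rightarrow> real^'n \<Rightarrow> complex" where
  "partial_dir i f x = vector_derivative (\<lambda>t. f (x + t *\<^sub>R axis i 1)) (at 0)"

fun dpart :: "'n::finite list \<Rightarrow> (real^'n \<Rightarrow> complex) \<Rightarrow> real^'n \<Rightarrow> complex" where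
  "dpart [] f = f"
| "dpart (i # ds) f = partial_dir i (dpart ds f)"

definition smooth_fun_on :: "(real^'n::finite) set \<Rightarrow> (real^'n \<Rightarrow> complex) \<Rightarrow> bool" where
  "smooth_fun_on U f \<longleftrightarrow>
     (\<forall>ds. continuous_on U (dpart ds f) \<and>
       (\<forall>i. \<forall>x\<in>U. (\<lambda>t. dpart ds f (x + t *\<^sub>R axis i 1)) differentiable (at 0)))"

definition schwartz :: "(real^'n::finite \<Rightarrow> complex) set" where
  "schwartz = {g. smooth_fun_on UNIV g \<and>
     (\<forall>ds k. bounded (range (\<lambda>x. (1 + norm x) ^ k * norm (dpart ds g x))))}"

definition schwartz00 :: "(real^'n::finite \<Rightarrow> complex) set" where
  "schwartz00 = {g \<in> schwartz. \<forall>ds. dpart ds g 0 = 0}"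

definition schwartz_seminorm :: "nat \<Rightarrow> 'n::finite list \<Rightarrow> (real^'n \<Rightarrow> complex) \<Rightarrow> real" where
  "schwartz_seminorm k ds g = (SUP x. (1 + norm x) ^ k * norm (dpart ds g x))"

definition schwartz_seminorm_sum :: "nat \<Rightarrow> (real^'n::finite \<Rightarrow> complex) \<Rightarrow> real" where
  "schwartz_seminorm_sum N g =
     (\<Sum>k\<le>N. \<Sum>ds\<in>{ds :: 'n list. length ds \<le> N}. schwartz_seminorm k ds g)"

definition tempered_distribution :: "((real^'n::finite \<Rightarrow> complex) \<Rightarrow> complex) \<Rightarrow> bool" where
  "tempered_distribution T \<longleftrightarrow>
     (\<forall>f\<in>schwartz. \<forall>g\<in>schwartz. T (\<lambda>x. f x + g x) = T f + T g) \<and>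
     (\<forall>c. \<forall>f\<in>schwartz. T (\<lambda>x. c * f x) = c * T f) \<and>
     (\<exists>C N. \<forall>g\<in>schwartz. norm (T g) \<le> C * schwartz_seminorm_sum N g)"

end

theory Submission
  imports Defs "HOL-Library.Function_Algebras"
begin

(* Away from the origin the Leibniz rule writes every derivative of m g as a sum of products of
   derivatives of m and of g. A function g in S_00 is flat at 0: integrating along the coordinate
   axes k times gives |D^b g(y)| <= n^k |y|^k S(g) with S(g) a Schwartz seminorm. Taking k large
   beats the singularity |y|^(-L1) of the derivatives of m, so every derivative of m g is
   O(|y|^2) at 0; hence m g is smooth with vanishing jet at 0. Far out, the decay of g beats the
   growth |y|^L2. Both estimates are uniform in g, so every Schwartz seminorm of m g is bounded by
   finitely many seminorms of g, which gives (ii) after composing with T. The extension to all of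
   S is the Hahn-Banach theorem, dominated by a multiple of a sum of seminorms. *)

section \<open>Partial derivatives along coordinate lines\<close>

lemma open_line_preimage:
  fixes x e :: "'a::real_normed_vector"
  assumes "open U"
  shows "open {t::real. x + t *\<^sub>R e \<in> U}"
proof -
  have "open ((\<lambda>t::real. x + t *\<^sub>R e) -` U)"
    by (intro open_vimage assms continuous_intros)
  then show ?thesis by (simp add: vimage_def)
qed

lemma has_vector_derivative_line_cong_open:
  fixes x e :: "'a::real_normed_vector"
  assumes "open U" "x \<in> U" "\<And>y. y \<in> U \<Longrightarrow> F y = G y"
    and "((\<lambda>t. G (x + t *\<^sub>R e)) has_vector_derivative D) (at 0)"
  shows "((\<lambda>t. F (x + t *\<^sub>R e)) has_vector_derivative D) (at 0)"
  by (rule has_vector_derivative_transform_within_open[OF assms(4) open_line_preimage[OF assms(1), of x e]])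
     (use assms(2,3) in auto)

lemma partial_dir_cong_open:
  assumes "open U" "x \<in> U" "\<And>y. y \<in> U \<Longrightarrow> F y = G y"
  shows "partial_dir i F x = partial_dir i G x"
proof -
  have "eventually (\<lambda>t. t \<in> UNIV \<longrightarrow> F (x + t *\<^sub>R axis i 1) = G (x + t *\<^sub>R axis i 1)) (nhds 0)"
    unfolding eventually_nhds
    by (rule exI[of _ "{t. x + t *\<^sub>R axis i 1 \<in> U}"]) (use open_line_preimage[OF assms(1)] assms(2,3) in auto)
  from vector_derivative_cong_eq[OF this refl refl UNIV_I] show ?thesis
    unfolding partial_dir_def by simp
qed

lemma dpart_cong_open:
  assumes "open U" "\<And>y. y \<in> U \<Longrightarrow> F y = G y" "x \<in> U"
  shows "dpart ds F x = dpart ds G x"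
  using assms(3)
proof (induction ds arbitrary: x)
  case Nil then show ?case using assms(2) by simp
next
  case (Cons i ds)
  then show ?case using partial_dir_cong_open[OF assms(1) Cons.prems, of "dpart ds F" "dpart ds G"] by simp
qed

lemma partial_dir_eqI:
  assumes "((\<lambda>t. F (x + t *\<^sub>R axis i 1)) has_vector_derivative D) (at 0)"
  shows "partial_dir i F x = D"
  using assms unfolding partial_dir_def by (simp add: vector_derivative_at)

lemma has_vector_derivative_partial_dir:
  assumes "(\<lambda>t. F (x + t *\<^sub>R axis i 1)) differentiable (at 0)"
  shows "((\<lambda>t. F (x + t *\<^sub>R axis i 1)) has_vector_derivative partial_dir i F x) (at 0)"
  using assms unfolding partial_dir_def by (simp add: vector_derivative_works)

lemma has_vector_derivative_partial_dir_at:
  assumes "(\<lambda>t. F ((x + s *\<^sub>R axis i 1) + t *\<^sub>R axis i 1)) differentiable (at 0)"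
  shows "((\<lambda>t. F (x + t *\<^sub>R axis i 1)) has_vector_derivative partial_dir i F (x + s *\<^sub>R axis i 1)) (at s)"
proof -
  have shifted: "((\<lambda>t. F ((x + s *\<^sub>R axis i 1) + t *\<^sub>R axis i 1)) has_vector_derivative
      partial_dir i F (x + s *\<^sub>R axis i 1)) (at ((\<lambda>t. t - s) s))"
    using has_vector_derivative_partial_dir[OF assms] by simp
  have shift: "((\<lambda>t. t - s) has_vector_derivative 1) (at s)"
    by (auto intro!: derivative_eq_intros)
  have "(\<lambda>t. F ((x + s *\<^sub>R axis i 1) + t *\<^sub>R axis i 1)) \<circ> (\<lambda>t. t - s) = (\<lambda>t. F (x + t *\<^sub>R axis i 1))"
    by (auto simp: o_def algebra_simps)
  then show ?thesis using vector_diff_chain_at[OF shift shifted] by simp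
qed

lemma smooth_fun_on_has_partial:
  assumes "smooth_fun_on U f" "x \<in> U"
  shows "((\<lambda>t. dpart ds f (x + t *\<^sub>R axis i 1)) has_vector_derivative dpart (i # ds) f x) (at 0)"
  using assms has_vector_derivative_partial_dir[of "dpart ds f" x i] unfolding smooth_fun_on_def by auto

lemma smooth_fun_on_continuous_dpart:
  "smooth_fun_on U f \<Longrightarrow> continuous_on U (dpart ds f)"
  unfolding smooth_fun_on_def by auto

lemma smooth_fun_onI:
  assumes "\<And>ds. continuous_on U (dpart ds f)"
    and "\<And>ds i x. x \<in> U \<Longrightarrow> \<exists>D. ((\<lambda>t. dpart ds f (x + t *\<^sub>R axis i 1)) has_vector_derivative D) (at 0)"
  shows "smooth_fun_on U f"
  using assms differentiableI_vector unfolding smooth_fun_on_def by metis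

lemma smooth_fun_on_subset: "smooth_fun_on U f \<Longrightarrow> V \<subseteq> U \<Longrightarrow> smooth_fun_on V f"
  unfolding smooth_fun_on_def by (auto intro: continuous_on_subset)

lemma dpart_add_open:
  assumes "open U" "smooth_fun_on U f" "smooth_fun_on U g" "x \<in> U"
  shows "dpart ds (\<lambda>y. f y + g y) x = dpart ds f x + dpart ds g x"
  using assms(4)
proof (induction ds arbitrary: x)
  case Nil then show ?case by simp
next
  case (Cons i ds)
  have "dpart (i # ds) (\<lambda>y. f y + g y) x = partial_dir i (\<lambda>y. dpart ds f y + dpart ds g y) x"
    using partial_dir_cong_open[OF assms(1) Cons.prems, of "dpart ds (\<lambda>y. f y + g y)"] Cons.IH by simp
  also have "\<dots> = dpart (i # ds) f x + dpart (i # ds) g x"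
    using partial_dir_eqI[OF has_vector_derivative_add[OF
          smooth_fun_on_has_partial[OF assms(2) Cons.prems] smooth_fun_on_has_partial[OF assms(3) Cons.prems]]] .
  finally show ?case .
qed

lemma smooth_fun_on_add:
  assumes U: "open U" and f: "smooth_fun_on U f" and g: "smooth_fun_on U g"
  shows "smooth_fun_on U (\<lambda>y. f y + g y)"
proof (rule smooth_fun_onI)
  show "continuous_on U (dpart ds (\<lambda>y. f y + g y))" for ds
    using continuous_on_add[OF smooth_fun_on_continuous_dpart[OF f] smooth_fun_on_continuous_dpart[OF g]]
    by (rule continuous_on_eq) (simp add: dpart_add_open[OF U f g])
  show "\<exists>D. ((\<lambda>t. dpart ds (\<lambda>y. f y + g y) (x + t *\<^sub>R axis i 1)) has_vector_derivative D) (at 0)"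
    if x: "x \<in> U" for ds i x
    using has_vector_derivative_line_cong_open[OF U x dpart_add_open[OF U f g]
        has_vector_derivative_add[OF smooth_fun_on_has_partial[OF f x] smooth_fun_on_has_partial[OF g x]]]
    by blast
qed

lemma dpart_cmult_open:
  assumes "open U" "smooth_fun_on U f" "x \<in> U"
  shows "dpart ds (\<lambda>y. c * f y) x = c * dpart ds f x"
  using assms(3)
proof (induction ds arbitrary: x)
  case Nil then show ?case by simp
next
  case (Cons i ds)
  have "dpart (i # ds) (\<lambda>y. c * f y) x = partial_dir i (\<lambda>y. c * dpart ds f y) x"
    using partial_dir_cong_open[OF assms(1) Cons.prems, of "dpart ds (\<lambda>y. c * f y)"] Cons.IH by simp
  also have "\<dots> = c * dpart (i # ds) f x"
    using partial_dir_eqI[OF has_vector_derivative_mult_right[OF smooth_fun_on_has_partial[OF assms(2) Cons.prems]]] .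
  finally show ?case .
qed

lemma smooth_fun_on_cmult:
  assumes U: "open U" and f: "smooth_fun_on U f"
  shows "smooth_fun_on U (\<lambda>y. c * f y)"
proof (rule smooth_fun_onI)
  show "continuous_on U (dpart ds (\<lambda>y. c * f y))" for ds
    using continuous_on_mult[OF continuous_on_const smooth_fun_on_continuous_dpart[OF f]]
    by (rule continuous_on_eq) (simp add: dpart_cmult_open[OF U f])
  show "\<exists>D. ((\<lambda>t. dpart ds (\<lambda>y. c * f y) (x + t *\<^sub>R axis i 1)) has_vector_derivative D) (at 0)"
    if x: "x \<in> U" for ds i x
    using has_vector_derivative_line_cong_open[OF U x dpart_cmult_open[OF U f]
        has_vector_derivative_mult_right[OF smooth_fun_on_has_partial[OF f x]]]
    by blast
qed

lemma dpart_zero: "dpart ds (\<lambda>x::real^'n::finite. 0::complex) = (\<lambda>x. 0)"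
proof (induction ds)
  case (Cons i ds)
  have "partial_dir i (\<lambda>x::real^'n. 0::complex) x = 0" for x
    by (rule partial_dir_eqI) simp
  moreover have "dpart (i # ds) (\<lambda>x::real^'n. 0::complex) = partial_dir i (\<lambda>x. 0)"
    by (simp only: dpart.simps Cons.IH)
  ultimately show ?case by (simp add: fun_eq_iff)
qed simp

text \<open>A multi-index is a list of directions; each direction goes to one of the two factors,
  so the Leibniz rule is a sum over all \<open>2 ^ length ds\<close> ways of splitting the list.\<close>

fun leibniz_splits :: "'n list \<Rightarrow> ('n list \<times> 'n list) list" where
  "leibniz_splits [] = [([], [])]"
| "leibniz_splits (i # ds) =
     map (\<lambda>(a, b). (i # a, b)) (leibniz_splits ds) @ map (\<lambda>(a, b). (a, i # b)) (leibniz_splits ds)"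

definition leibniz_sum ::
  "(real^'n::finite \<Rightarrow> complex) \<Rightarrow> (real^'n \<Rightarrow> complex) \<Rightarrow> ('n list \<times> 'n list) list \<Rightarrow> real^'n \<Rightarrow> complex"
  where "leibniz_sum f g P y = (\<Sum>(a, b)\<leftarrow>P. dpart a f y * dpart b g y)"

lemma has_vector_derivative_sum_list:
  "(\<And>e. e \<in> set xs \<Longrightarrow> ((\<lambda>t. F e t) has_vector_derivative F' e) net) \<Longrightarrow>
   ((\<lambda>t. \<Sum>e\<leftarrow>xs. F e t) has_vector_derivative (\<Sum>e\<leftarrow>xs. F' e)) net"
  by (induction xs) (auto intro!: has_vector_derivative_add)

lemma leibniz_sum_has_partial:
  assumes f: "smooth_fun_on U f" and g: "smooth_fun_on U g" and x: "x \<in> U"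
  shows "((\<lambda>t. leibniz_sum f g P (x + t *\<^sub>R axis i 1)) has_vector_derivative
     leibniz_sum f g (map (\<lambda>(a, b). (i # a, b)) P) x + leibniz_sum f g (map (\<lambda>(a, b). (a, i # b)) P) x) (at 0)"
proof -
  have "((\<lambda>t. \<Sum>e\<leftarrow>P. (\<lambda>(a, b). dpart a f (x + t *\<^sub>R axis i 1) * dpart b g (x + t *\<^sub>R axis i 1)) e)
     has_vector_derivative (\<Sum>e\<leftarrow>P. (\<lambda>(a, b). dpart a f x * dpart (i # b) g x + dpart (i # a) f x * dpart b g x) e)) (at 0)"
  proof (rule has_vector_derivative_sum_list)
    fix e :: "'a list \<times> 'a list"
    obtain a b where e: "e = (a, b)" by (cases e)
    show "((\<lambda>t. (\<lambda>(a, b). dpart a f (x + t *\<^sub>R axis i 1) * dpart b g (x + t *\<^sub>R axis i 1)) e) has_vector_derivative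
       (\<lambda>(a, b). dpart a f x * dpart (i # b) g x + dpart (i # a) f x * dpart b g x) e) (at 0)"
      using has_vector_derivative_mult[OF smooth_fun_on_has_partial[OF f x] smooth_fun_on_has_partial[OF g x]]
      by (simp add: e)
  qed
  moreover have "(\<Sum>e\<leftarrow>P. (\<lambda>(a, b). dpart a f x * dpart (i # b) g x + dpart (i # a) f x * dpart b g x) e)
     = leibniz_sum f g (map (\<lambda>(a, b). (i # a, b)) P) x + leibniz_sum f g (map (\<lambda>(a, b). (a, i # b)) P) x"
    unfolding leibniz_sum_def by (induction P) (auto simp: algebra_simps)
  ultimately show ?thesis unfolding leibniz_sum_def by simp
qed

lemma continuous_on_leibniz_sum:
  assumes f: "smooth_fun_on U f" and g: "smooth_fun_on U g"
  shows "continuous_on U (leibniz_sum f g P)"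
  unfolding leibniz_sum_def
proof (induction P)
  case (Cons e P)
  obtain a b where e: "e = (a, b)" by (cases e)
  have "continuous_on U (\<lambda>y. dpart a f y * dpart b g y)"
    by (intro continuous_on_mult smooth_fun_on_continuous_dpart[OF f] smooth_fun_on_continuous_dpart[OF g])
  then show ?case using Cons by (simp add: e continuous_on_add)
qed simp

lemma dpart_mult_open:
  assumes U: "open U" and f: "smooth_fun_on U f" and g: "smooth_fun_on U g" and "x \<in> U"
  shows "dpart ds (\<lambda>y. f y * g y) x = leibniz_sum f g (leibniz_splits ds) x"
  using assms(4)
proof (induction ds arbitrary: x)
  case Nil then show ?case by (simp add: leibniz_sum_def)
next
  case (Cons i ds)
  have "dpart (i # ds) (\<lambda>y. f y * g y) x = partial_dir i (leibniz_sum f g (leibniz_splits ds)) x"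
    using partial_dir_cong_open[OF U Cons.prems, of "dpart ds (\<lambda>y. f y * g y)"] Cons.IH by simp
  also have "\<dots> = leibniz_sum f g (map (\<lambda>(a, b). (i # a, b)) (leibniz_splits ds)) x
                   + leibniz_sum f g (map (\<lambda>(a, b). (a, i # b)) (leibniz_splits ds)) x"
    by (rule partial_dir_eqI[OF leibniz_sum_has_partial[OF f g Cons.prems]])
  also have "\<dots> = leibniz_sum f g (leibniz_splits (i # ds)) x"
    by (simp add: leibniz_sum_def)
  finally show ?case .
qed

lemma norm_leibniz_sum_le:
  "norm (leibniz_sum f g P y) \<le> (\<Sum>(a, b)\<leftarrow>P. norm (dpart a f y) * norm (dpart b g y))"
  unfolding leibniz_sum_def
proof (induction P)
  case (Cons e P)
  obtain a b where e: "e = (a, b)" by (cases e)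
  have "norm (\<Sum>(a, b)\<leftarrow>e # P. dpart a f y * dpart b g y)
      \<le> norm (dpart a f y * dpart b g y) + norm (\<Sum>(a, b)\<leftarrow>P. dpart a f y * dpart b g y)"
    by (simp add: e norm_triangle_ineq)
  then show ?case using Cons by (simp add: e norm_mult)
qed simp

section \<open>Schwartz seminorms\<close>

lemma schwartz_imp_smooth: "g \<in> schwartz \<Longrightarrow> smooth_fun_on UNIV g"
  unfolding schwartz_def by auto

lemma schwartz00_subset_schwartz: "schwartz00 \<subseteq> schwartz"
  unfolding schwartz00_def by auto

lemma schwartzI:
  assumes "smooth_fun_on UNIV g" "\<And>ds k. \<exists>B. \<forall>x. (1 + norm x) ^ k * norm (dpart ds g x) \<le> B"
  shows "g \<in> schwartz"
  unfolding schwartz_def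
proof (safe intro!: assms(1))
  fix ds k
  obtain B where "\<forall>x. (1 + norm x) ^ k * norm (dpart ds g x) \<le> B" using assms(2) by blast
  then show "bounded (range (\<lambda>x. (1 + norm x) ^ k * norm (dpart ds g x)))"
    unfolding bounded_iff by (intro exI[of _ B]) auto
qed

lemma schwartz_seminorm_upper:
  assumes "g \<in> schwartz"
  shows "(1 + norm x) ^ k * norm (dpart ds g x) \<le> schwartz_seminorm k ds g"
proof -
  have "bounded (range (\<lambda>x. (1 + norm x) ^ k * norm (dpart ds g x)))"
    using assms unfolding schwartz_def by auto
  then show ?thesis
    unfolding schwartz_seminorm_def by (intro cSUP_upper bounded_imp_bdd_above) simp_all
qed

lemma schwartz_seminorm_least:
  "(\<And>x. (1 + norm x) ^ k * norm (dpart ds g x) \<le> B) \<Longrightarrow> schwartz_seminorm k ds g \<le> B"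
  unfolding schwartz_seminorm_def by (rule cSUP_least) auto

lemma schwartz_seminorm_nonneg: "g \<in> schwartz \<Longrightarrow> 0 \<le> schwartz_seminorm k ds g"
  using schwartz_seminorm_upper[of g 0 k ds] by (smt (verit) mult_nonneg_nonneg norm_ge_zero zero_le_power)

lemma finite_lists_length_le_UNIV: "finite {ds :: 'n::finite list. length ds \<le> N}"
  using finite_lists_length_le[of "UNIV :: 'n set" N] by simp

lemma schwartz_seminorm_sum_nonneg: "g \<in> schwartz \<Longrightarrow> 0 \<le> schwartz_seminorm_sum N g"
  unfolding schwartz_seminorm_sum_def by (intro sum_nonneg schwartz_seminorm_nonneg)

lemma schwartz_seminorm_le_sum:
  assumes "g \<in> schwartz" "k \<le> N" "length ds \<le> N"
  shows "schwartz_seminorm k ds g \<le> schwartz_seminorm_sum N g"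
proof -
  have "schwartz_seminorm k ds g \<le> (\<Sum>ds\<in>{ds. length ds \<le> N}. schwartz_seminorm k ds g)"
    by (rule member_le_sum) (use assms finite_lists_length_le_UNIV schwartz_seminorm_nonneg in auto)
  also have "\<dots> \<le> schwartz_seminorm_sum N g"
    unfolding schwartz_seminorm_sum_def
    by (rule member_le_sum[where f = "\<lambda>k. \<Sum>ds\<in>{ds. length ds \<le> N}. schwartz_seminorm k ds g"])
       (use assms schwartz_seminorm_nonneg in \<open>auto intro!: sum_nonneg\<close>)
  finally show ?thesis .
qed

lemma schwartz_seminorm_sum_mono:
  assumes "g \<in> schwartz" "N \<le> N'"
  shows "schwartz_seminorm_sum N g \<le> schwartz_seminorm_sum N' g"
proof -
  have "schwartz_seminorm_sum N g \<le> (\<Sum>k\<le>N. \<Sum>ds\<in>{ds. length ds \<le> N'}. schwartz_seminorm k ds g)"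
    unfolding schwartz_seminorm_sum_def
    by (intro sum_mono sum_mono2 finite_lists_length_le_UNIV) (use assms schwartz_seminorm_nonneg in auto)
  also have "\<dots> \<le> schwartz_seminorm_sum N' g"
    unfolding schwartz_seminorm_sum_def
    by (intro sum_mono2) (use assms schwartz_seminorm_nonneg in \<open>auto intro!: sum_nonneg\<close>)
  finally show ?thesis .
qed

lemma schwartz_seminorm_sum_bound_mono:
  assumes "g \<in> schwartz" "N \<le> N'"
  shows "C * schwartz_seminorm_sum N g \<le> max C 0 * schwartz_seminorm_sum N' g"
  using schwartz_seminorm_sum_mono[OF assms] schwartz_seminorm_sum_nonneg[OF assms(1), of N]
  by (smt (verit) mult_left_mono mult_right_mono max.cobounded1 max.cobounded2)

lemma sum_schwartz_seminorm_bound: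
  assumes "finite A" "\<And>z. z \<in> Z \<Longrightarrow> \<pi> z \<in> schwartz"
    and "\<forall>e\<in>A. \<exists>C N. \<forall>z\<in>Z. F e z \<le> C * schwartz_seminorm_sum N (\<pi> z)"
  shows "\<exists>C N. \<forall>z\<in>Z. (\<Sum>e\<in>A. F e z) \<le> C * schwartz_seminorm_sum N (\<pi> z)"
  using assms(1,3)
proof (induction A rule: finite_induct)
  case empty
  show ?case using assms(2) schwartz_seminorm_sum_nonneg by (intro exI[of _ 0]) auto
next
  case (insert e A)
  obtain C1 N1 where 1: "\<forall>z\<in>Z. F e z \<le> C1 * schwartz_seminorm_sum N1 (\<pi> z)" using insert by auto
  obtain C2 N2 where 2: "\<forall>z\<in>Z. (\<Sum>e\<in>A. F e z) \<le> C2 * schwartz_seminorm_sum N2 (\<pi> z)" using insert by auto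
  have "(\<Sum>e\<in>insert e A. F e z) \<le> (max C1 0 + max C2 0) * schwartz_seminorm_sum (max N1 N2) (\<pi> z)"
    if z: "z \<in> Z" for z
  proof -
    have "(\<Sum>e\<in>insert e A. F e z) = F e z + (\<Sum>e\<in>A. F e z)" using insert.hyps by simp
    also have "\<dots> \<le> C1 * schwartz_seminorm_sum N1 (\<pi> z) + C2 * schwartz_seminorm_sum N2 (\<pi> z)"
      using 1 2 z by (auto intro: add_mono)
    also have "\<dots> \<le> max C1 0 * schwartz_seminorm_sum (max N1 N2) (\<pi> z) + max C2 0 * schwartz_seminorm_sum (max N1 N2) (\<pi> z)"
      by (intro add_mono schwartz_seminorm_sum_bound_mono assms(2)[OF z]) simp_all
    finally show ?thesis by (simp add: distrib_right)
  qed
  then show ?case by blast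
qed

lemma sum_list_schwartz_seminorm_bound:
  assumes "\<And>z. z \<in> Z \<Longrightarrow> \<pi> z \<in> schwartz"
    and "\<forall>e\<in>set P. \<exists>C N. \<forall>z\<in>Z. F e z \<le> C * schwartz_seminorm_sum N (\<pi> z)"
  shows "\<exists>C N. \<forall>z\<in>Z. (\<Sum>e\<leftarrow>P. F e z) \<le> C * schwartz_seminorm_sum N (\<pi> z)"
proof -
  have "\<exists>C N. \<forall>z\<in>Z. (\<Sum>i<length P. F (P ! i) z) \<le> C * schwartz_seminorm_sum N (\<pi> z)"
    using assms by (intro sum_schwartz_seminorm_bound) auto
  then show ?thesis by (simp add: sum_list_sum_nth atLeast0LessThan)
qed

lemma weighted_dpart_add_le:
  assumes f: "f \<in> schwartz" and g: "g \<in> schwartz"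
  shows "(1 + norm x) ^ k * norm (dpart ds (\<lambda>x. f x + g x) x)
           \<le> schwartz_seminorm k ds f + schwartz_seminorm k ds g"
proof -
  have "(1 + norm x) ^ k * norm (dpart ds (\<lambda>x. f x + g x) x)
      \<le> (1 + norm x) ^ k * norm (dpart ds f x) + (1 + norm x) ^ k * norm (dpart ds g x)"
    using dpart_add_open[OF open_UNIV schwartz_imp_smooth[OF f] schwartz_imp_smooth[OF g]]
    by (simp add: distrib_left[symmetric] mult_left_mono norm_triangle_ineq)
  also have "\<dots> \<le> schwartz_seminorm k ds f + schwartz_seminorm k ds g"
    using schwartz_seminorm_upper[OF f] schwartz_seminorm_upper[OF g] by (rule add_mono)
  finally show ?thesis .
qed

lemma weighted_dpart_cmult:
  assumes f: "f \<in> schwartz"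
  shows "(1 + norm x) ^ k * norm (dpart ds (\<lambda>x. c * f x) x) = norm c * ((1 + norm x) ^ k * norm (dpart ds f x))"
  using dpart_cmult_open[OF open_UNIV schwartz_imp_smooth[OF f]] by (simp add: norm_mult)

lemma schwartz_add:
  assumes f: "f \<in> schwartz" and g: "g \<in> schwartz"
  shows "(\<lambda>x. f x + g x) \<in> schwartz"
proof (rule schwartzI)
  show "smooth_fun_on UNIV (\<lambda>x. f x + g x)"
    by (rule smooth_fun_on_add[OF open_UNIV schwartz_imp_smooth[OF f] schwartz_imp_smooth[OF g]])
  show "\<exists>B. \<forall>x. (1 + norm x) ^ k * norm (dpart ds (\<lambda>x. f x + g x) x) \<le> B" for ds k
    using weighted_dpart_add_le[OF f g] by blast
qed

lemma schwartz_cmult: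
  assumes f: "f \<in> schwartz"
  shows "(\<lambda>x. c * f x) \<in> schwartz"
proof (rule schwartzI)
  show "smooth_fun_on UNIV (\<lambda>x. c * f x)"
    by (rule smooth_fun_on_cmult[OF open_UNIV schwartz_imp_smooth[OF f]])
  have "(1 + norm x) ^ k * norm (dpart ds (\<lambda>x. c * f x) x) \<le> norm c * schwartz_seminorm k ds f" for ds k x
    unfolding weighted_dpart_cmult[OF f] by (intro mult_left_mono schwartz_seminorm_upper[OF f]) simp
  then show "\<exists>B. \<forall>x. (1 + norm x) ^ k * norm (dpart ds (\<lambda>x. c * f x) x) \<le> B" for ds k
    by blast
qed

lemma schwartz_seminorm_cmult_le:
  assumes f: "f \<in> schwartz"
  shows "schwartz_seminorm k ds (\<lambda>x. c * f x) \<le> norm c * schwartz_seminorm k ds f"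
proof (rule schwartz_seminorm_least)
  show "(1 + norm x) ^ k * norm (dpart ds (\<lambda>x. c * f x) x) \<le> norm c * schwartz_seminorm k ds f" for x
    unfolding weighted_dpart_cmult[OF f] by (intro mult_left_mono schwartz_seminorm_upper[OF f]) simp
qed

lemma schwartz_seminorm_cmult:
  assumes f: "f \<in> schwartz"
  shows "schwartz_seminorm k ds (\<lambda>x. c * f x) = norm c * schwartz_seminorm k ds f"
proof (cases "c = 0")
  case True
  then show ?thesis
    using schwartz_seminorm_cmult_le[OF f, of k ds c] schwartz_seminorm_nonneg[OF schwartz_cmult[OF f, of c], of k ds]
    by simp
next
  case False
  have "(\<lambda>x. inverse c * (c * f x)) = f" using False by (simp add: fun_eq_iff)
  then have "schwartz_seminorm k ds f = schwartz_seminorm k ds (\<lambda>x. inverse c * (c * f x))"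
    by simp
  also have "\<dots> \<le> inverse (norm c) * schwartz_seminorm k ds (\<lambda>x. c * f x)"
    using schwartz_seminorm_cmult_le[OF schwartz_cmult[OF f], of k ds "inverse c"] by (simp add: norm_inverse)
  finally have "norm c * schwartz_seminorm k ds f \<le> schwartz_seminorm k ds (\<lambda>x. c * f x)"
    using False by (simp add: field_simps)
  then show ?thesis using schwartz_seminorm_cmult_le[OF f, of k ds c] by simp
qed

lemma schwartz_seminorm_sum_add:
  assumes "f \<in> schwartz" "g \<in> schwartz"
  shows "schwartz_seminorm_sum N (\<lambda>x. f x + g x) \<le> schwartz_seminorm_sum N f + schwartz_seminorm_sum N g"
  unfolding schwartz_seminorm_sum_def sum.distrib[symmetric]
  by (intro sum_mono schwartz_seminorm_least weighted_dpart_add_le assms)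

lemma schwartz_seminorm_sum_cmult:
  "f \<in> schwartz \<Longrightarrow> schwartz_seminorm_sum N (\<lambda>x. c * f x) = norm c * schwartz_seminorm_sum N f"
  unfolding schwartz_seminorm_sum_def sum_distrib_left by (simp add: schwartz_seminorm_cmult)

lemma schwartz00_add:
  "f \<in> schwartz00 \<Longrightarrow> g \<in> schwartz00 \<Longrightarrow> (\<lambda>x. f x + g x) \<in> schwartz00"
  using schwartz_add[of f g] dpart_add_open[OF open_UNIV schwartz_imp_smooth schwartz_imp_smooth, of f g]
  unfolding schwartz00_def by auto

lemma schwartz00_cmult: "f \<in> schwartz00 \<Longrightarrow> (\<lambda>x. c * f x) \<in> schwartz00"
  using schwartz_cmult[of f c] dpart_cmult_open[OF open_UNIV schwartz_imp_smooth, of f _ _ c]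
  unfolding schwartz00_def by auto

lemma zero_in_schwartz00: "(\<lambda>x. 0) \<in> schwartz00"
proof -
  have "smooth_fun_on UNIV (\<lambda>x::real^'n. 0::complex)"
    unfolding smooth_fun_on_def dpart_zero by (auto intro: differentiableI_vector[OF has_vector_derivative_const])
  then have "(\<lambda>x::real^'n. 0::complex) \<in> schwartz"
    by (rule schwartzI) (auto simp: dpart_zero)
  then show ?thesis unfolding schwartz00_def by (simp add: dpart_zero)
qed

section \<open>Flat Schwartz functions vanish to infinite order at the origin\<close>

lemma norm_diff_le_vector_derivative_bound:
  fixes \<phi> :: "real \<Rightarrow> 'a::real_normed_vector"
  assumes "\<And>t. t \<in> closed_segment 0 s \<Longrightarrow> (\<phi> has_vector_derivative \<phi>' t) (at t)"
    and "\<And>t. t \<in> closed_segment 0 s \<Longrightarrow> norm (\<phi>' t) \<le> B"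
  shows "norm (\<phi> s - \<phi> 0) \<le> B * \<bar>s\<bar>"
proof -
  have "norm (\<phi> s - \<phi> 0) \<le> B * norm (s - 0)"
  proof (rule differentiable_bound[where f' = "\<lambda>t h. h *\<^sub>R \<phi>' t"])
    fix t assume t: "t \<in> closed_segment 0 s"
    show "(\<phi> has_derivative (\<lambda>h. h *\<^sub>R \<phi>' t)) (at t within closed_segment 0 s)"
      using assms(1)[OF t] unfolding has_vector_derivative_def by (rule has_derivative_at_withinI)
    show "onorm (\<lambda>h::real. h *\<^sub>R \<phi>' t) \<le> B"
      using assms(2)[OF t] by (simp add: onorm_scaleR_left[OF bounded_linear_ident] onorm_id)
  qed auto
  then show ?thesis by simp
qed

text \<open>Inserting the coordinates of \<open>y\<close> one at a time joins \<open>0\<close> to \<open>y\<close> by a path of segments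
  parallel to the axes.\<close>

definition coord_proj :: "'n::finite set \<Rightarrow> real^'n \<Rightarrow> real^'n" where
  "coord_proj A y = (\<chi> i. if i \<in> A then y $ i else 0)"

lemma coord_proj_insert:
  "j \<notin> A \<Longrightarrow> coord_proj (insert j A) y = coord_proj A y + (y $ j) *\<^sub>R axis j 1"
  unfolding coord_proj_def by (auto simp: vec_eq_iff axis_def)

lemma norm_coord_proj_segment_le:
  assumes "j \<notin> A" "t \<in> closed_segment 0 (y $ j)"
  shows "norm (coord_proj A y + t *\<^sub>R axis j 1) \<le> norm y"
proof (rule norm_le_componentwise_cart)
  fix i
  have "\<bar>t\<bar> \<le> \<bar>y $ j\<bar>" using assms(2) by (auto simp: closed_segment_eq_real_ivl split: if_splits)
  then show "norm ((coord_proj A y + t *\<^sub>R axis j 1) $ i) \<le> norm (y $ i)"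
    using assms(1) unfolding coord_proj_def by (auto simp: axis_def)
qed

lemma norm_dpart_le_of_partial_bound:
  fixes g :: "real^'n::finite \<Rightarrow> complex"
  assumes g: "smooth_fun_on UNIV g" and g0: "dpart ds g 0 = 0"
    and bound: "\<And>j z. norm z \<le> norm y \<Longrightarrow> norm (dpart (j # ds) g z) \<le> M"
  shows "norm (dpart ds g y) \<le> real CARD('n) * norm y * M"
proof -
  have M0: "0 \<le> M" using order_trans[OF norm_ge_zero bound[of 0]] by simp
  have "norm (dpart ds g (coord_proj A y)) \<le> real (card A) * norm y * M" if "finite A" for A
    using that
  proof (induction A rule: finite_induct)
    case empty
    have "coord_proj {} y = 0" unfolding coord_proj_def by (simp add: vec_eq_iff)
    then show ?case using g0 by simp
  next
    case (insert j A)
    let ?p = "coord_proj A y"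
    have "norm (dpart ds g (?p + (y $ j) *\<^sub>R axis j 1) - dpart ds g (?p + 0 *\<^sub>R axis j 1)) \<le> M * \<bar>y $ j\<bar>"
    proof (rule norm_diff_le_vector_derivative_bound[where \<phi> = "\<lambda>t. dpart ds g (?p + t *\<^sub>R axis j 1)"])
      fix t assume t: "t \<in> closed_segment 0 (y $ j)"
      have "(\<lambda>s. dpart ds g ((?p + t *\<^sub>R axis j 1) + s *\<^sub>R axis j 1)) differentiable (at 0)"
        using g unfolding smooth_fun_on_def by auto
      then show "((\<lambda>t. dpart ds g (?p + t *\<^sub>R axis j 1)) has_vector_derivative
          dpart (j # ds) g (?p + t *\<^sub>R axis j 1)) (at t)"
        using has_vector_derivative_partial_dir_at[of "dpart ds g" ?p t j] by simp
      show "norm (dpart (j # ds) g (?p + t *\<^sub>R axis j 1)) \<le> M"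
        by (rule bound[OF norm_coord_proj_segment_le[OF insert.hyps(2) t]])
    qed
    then have "norm (dpart ds g (coord_proj (insert j A) y) - dpart ds g ?p) \<le> M * norm y"
      using coord_proj_insert[OF insert.hyps(2)] component_le_norm_cart[of y j] M0
      by (smt (verit, best) add.right_neutral mult_left_mono scale_zero_left)
    then have "norm (dpart ds g (coord_proj (insert j A) y)) \<le> norm (dpart ds g ?p) + M * norm y"
      by (smt (verit) norm_triangle_ineq2)
    moreover have "real (card (insert j A)) * norm y * M = M * norm y + real (card A) * norm y * M"
      using insert.hyps by (simp add: distrib_right)
    ultimately show ?case using insert.IH by linarith
  qed
  moreover have "coord_proj UNIV y = y" unfolding coord_proj_def by (simp add: vec_eq_iff)
  ultimately show ?thesis by (metis finite_class.finite_UNIV)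
qed

lemma schwartz00_dpart_decay:
  fixes g :: "real^'n::finite \<Rightarrow> complex"
  assumes g: "g \<in> schwartz00"
  shows "norm (dpart ds g y) \<le> real CARD('n) ^ k * norm y ^ k * schwartz_seminorm_sum (k + length ds) g"
proof (induction k arbitrary: ds y)
  have gs: "g \<in> schwartz" using g schwartz00_subset_schwartz by blast
  {
    case 0
    show ?case
      using schwartz_seminorm_upper[OF gs, of y 0 ds] schwartz_seminorm_le_sum[OF gs, of 0 "length ds" ds] by simp
  next
    case (Suc k)
    let ?M = "real CARD('n) ^ k * norm y ^ k * schwartz_seminorm_sum (Suc k + length ds) g"
    have "norm (dpart ds g y) \<le> real CARD('n) * norm y * ?M"
    proof (rule norm_dpart_le_of_partial_bound)
      show "smooth_fun_on UNIV g" "dpart ds g 0 = 0"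
        using schwartz_imp_smooth[OF gs] g unfolding schwartz00_def by auto
      fix j z assume z: "norm (z :: real^'n) \<le> norm y"
      have "norm (dpart (j # ds) g z) \<le> real CARD('n) ^ k * norm z ^ k * schwartz_seminorm_sum (k + length (j # ds)) g"
        by (rule Suc.IH)
      also have "\<dots> \<le> ?M"
        using z schwartz_seminorm_sum_nonneg[OF gs] by (auto intro!: mult_right_mono mult_left_mono power_mono)
      finally show "norm (dpart (j # ds) g z) \<le> ?M" .
    qed
    then show ?case by (simp add: ac_simps)
  }
qed

section \<open>The Hahn--Banach extension theorem\<close>

lemma le_cInf_add:
  fixes A B :: "real set"
  assumes "A \<noteq> {}" "B \<noteq> {}" "bdd_below A" "bdd_below B" "\<And>a b. a \<in> A \<Longrightarrow> b \<in> B \<Longrightarrow> v \<le> a + b"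
  shows "v \<le> Inf A + Inf B"
proof -
  have "v - Inf B \<le> a" if a: "a \<in> A" for a
  proof -
    have "v - a \<le> Inf B" by (rule cInf_greatest[OF assms(2)]) (use assms(5)[OF a] in force)
    then show ?thesis by simp
  qed
  then have "v - Inf B \<le> Inf A" by (intro cInf_greatest[OF assms(1)]) auto
  then show ?thesis by simp
qed

lemma cInf_image_mult_left:
  fixes A :: "real set"
  assumes "A \<noteq> {}" "bdd_below A" "c > 0"
  shows "Inf ((\<lambda>a. c * a) ` A) = c * Inf A"
proof (rule antisym)
  obtain M where M: "\<And>x. x \<in> A \<Longrightarrow> M \<le> x" using assms(2) unfolding bdd_below_def by blast
  have bdd: "bdd_below ((\<lambda>a. c * a) ` A)"
    unfolding bdd_below_def using M assms(3) by (auto intro!: exI[of _ "c * M"] mult_left_mono)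
  have "Inf ((\<lambda>a. c * a) ` A) / c \<le> a" if "a \<in> A" for a
    using cInf_lower[OF imageI[OF that] bdd] assms(3) by (simp add: divide_le_eq mult.commute)
  then have "Inf ((\<lambda>a. c * a) ` A) / c \<le> Inf A" by (intro cInf_greatest[OF assms(1)]) auto
  then show "Inf ((\<lambda>a. c * a) ` A) \<le> c * Inf A" using assms(3) by (simp add: divide_le_eq mult.commute)
  show "c * Inf A \<le> Inf ((\<lambda>a. c * a) ` A)"
    by (rule cInf_greatest) (use assms in \<open>auto intro!: mult_left_mono cInf_lower\<close>)
qed

definition sublinear_on :: "'a::real_vector set \<Rightarrow> ('a \<Rightarrow> real) \<Rightarrow> bool" where
  "sublinear_on V q \<longleftrightarrow> (\<forall>x\<in>V. \<forall>y\<in>V. q (x + y) \<le> q x + q y) \<and> (\<forall>x\<in>V. \<forall>c>0. q (c *\<^sub>R x) = c * q x)"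

definition linear_functional_on :: "'a::real_vector set \<Rightarrow> ('a \<Rightarrow> real) \<Rightarrow> bool" where
  "linear_functional_on V l \<longleftrightarrow> (\<forall>x\<in>V. \<forall>y\<in>V. l (x + y) = l x + l y) \<and> (\<forall>x\<in>V. \<forall>c. l (c *\<^sub>R x) = c * l x)"

text \<open>The epigraph turns the pointwise order of functionals on \<open>V\<close> into (reverse) set inclusion,
  which is the order Zorn's lemma is stated for.\<close>

definition epigraph_on :: "'a set \<Rightarrow> ('a \<Rightarrow> real) \<Rightarrow> ('a \<times> real) set" where
  "epigraph_on V q = {(x, c). x \<in> V \<and> q x \<le> c}"

definition sublinear_below :: "'a::real_vector set \<Rightarrow> ('a \<Rightarrow> real) \<Rightarrow> ('a \<Rightarrow> real) set" where
  "sublinear_below V p = {q. sublinear_on V q \<and> (\<forall>x\<in>V. q x \<le> p x)}"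

definition ray_infimum :: "('a::real_vector \<Rightarrow> real) \<Rightarrow> 'a \<Rightarrow> 'a \<Rightarrow> real" where
  "ray_infimum q x y = Inf ((\<lambda>t. q (y + t *\<^sub>R x) - t * q x) ` {0..})"

definition infimal_convolution_on :: "'a::real_vector set \<Rightarrow> ('a \<Rightarrow> real) \<Rightarrow> ('a \<Rightarrow> real) \<Rightarrow> 'a \<Rightarrow> real" where
  "infimal_convolution_on W p l x = Inf ((\<lambda>w. p (x - w) + l w) ` W)"

lemma epigraph_on_subset_iff: "epigraph_on V q1 \<subseteq> epigraph_on V q2 \<longleftrightarrow> (\<forall>x\<in>V. q2 x \<le> q1 x)"
  unfolding epigraph_on_def by force

context
  fixes V :: "'a::real_vector set"
  assumes V: "subspace V"
begin

lemma sublinear_on_zero: "sublinear_on V q \<Longrightarrow> q 0 = 0"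
  using subspace_0[OF V] unfolding sublinear_on_def by (metis scaleR_zero_right mult_cancel_right1 zero_less_numeral
      mult_2 add_cancel_left_left)

lemma sublinear_on_scaleR_nonneg: "sublinear_on V q \<Longrightarrow> x \<in> V \<Longrightarrow> c \<ge> 0 \<Longrightarrow> q (c *\<^sub>R x) = c * q x"
  using sublinear_on_zero unfolding sublinear_on_def by (cases "c = 0") auto

lemma sublinear_on_minus_le:
  assumes "sublinear_on V q" "x \<in> V"
  shows "- q (- x) \<le> q x"
proof -
  have "q (x + - x) \<le> q x + q (- x)" using assms subspace_neg[OF V] unfolding sublinear_on_def by blast
  then show ?thesis using sublinear_on_zero[OF assms(1)] by simp
qed

lemma sublinear_on_odd_imp_linear:
  assumes q: "sublinear_on V q" and odd: "\<And>x. x \<in> V \<Longrightarrow> q (- x) = - q x"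
  shows "linear_functional_on V q"
  unfolding linear_functional_on_def
proof (intro conjI ballI allI)
  fix x y assume x: "x \<in> V" and y: "y \<in> V"
  have "q (x + y) \<le> q x + q y" using q x y unfolding sublinear_on_def by blast
  moreover have "q (- x + - y) \<le> q (- x) + q (- y)" using q x y subspace_neg[OF V] unfolding sublinear_on_def by blast
  then have "- q (x + y) \<le> - q x - q y" using odd[OF subspace_add[OF V x y]] odd[OF x] odd[OF y] by simp
  ultimately show "q (x + y) = q x + q y" by linarith
next
  fix x c assume x: "x \<in> V"
  show "q (c *\<^sub>R x) = c * q x"
  proof (cases "c \<ge> 0")
    case True then show ?thesis using sublinear_on_scaleR_nonneg[OF q x] by simp
  next
    case False
    have "q (c *\<^sub>R x) = - q ((- c) *\<^sub>R x)"
      using odd[OF subspace_scale[OF V x, of "- c"]] by simp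
    also have "\<dots> = c * q x" using sublinear_on_scaleR_nonneg[OF q x, of "- c"] False by simp
    finally show ?thesis .
  qed
qed

lemma sublinear_on_Inf_chain:
  assumes Q: "Q \<noteq> {}" "\<And>q. q \<in> Q \<Longrightarrow> sublinear_on V q"
    and chain: "\<And>q1 q2. q1 \<in> Q \<Longrightarrow> q2 \<in> Q \<Longrightarrow> (\<forall>x\<in>V. q1 x \<le> q2 x) \<or> (\<forall>x\<in>V. q2 x \<le> q1 x)"
    and bdd: "\<And>x. x \<in> V \<Longrightarrow> bdd_below ((\<lambda>q. q x) ` Q)"
  shows "sublinear_on V (\<lambda>x. Inf ((\<lambda>q. q x) ` Q))"
  unfolding sublinear_on_def
proof (intro conjI ballI allI impI)
  fix x y assume x: "x \<in> V" and y: "y \<in> V"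
  show "Inf ((\<lambda>q. q (x + y)) ` Q) \<le> Inf ((\<lambda>q. q x) ` Q) + Inf ((\<lambda>q. q y) ` Q)"
  proof (rule le_cInf_add)
    fix a b assume "a \<in> (\<lambda>q. q x) ` Q" "b \<in> (\<lambda>q. q y) ` Q"
    then obtain q1 q2 where q: "q1 \<in> Q" "q2 \<in> Q" "a = q1 x" "b = q2 y" by auto
    text \<open>Of two comparable functionals the smaller one bounds both \<open>a\<close> and \<open>b\<close>.\<close>
    obtain q where "q \<in> Q" "q x \<le> a" "q y \<le> b"
      using chain[OF q(1,2)] q x y by blast
    then have "Inf ((\<lambda>q. q (x + y)) ` Q) \<le> q x + q y"
      using cInf_lower[OF imageI bdd[OF subspace_add[OF V x y]]] Q(2) x y
      unfolding sublinear_on_def by (meson order_trans)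
    then show "Inf ((\<lambda>q. q (x + y)) ` Q) \<le> a + b"
      using \<open>q x \<le> a\<close> \<open>q y \<le> b\<close> by linarith
  qed (use Q(1) bdd x y in auto)
next
  fix x and c :: real assume x: "x \<in> V" and c: "c > 0"
  have "(\<lambda>q. q (c *\<^sub>R x)) ` Q = (\<lambda>a. c * a) ` ((\<lambda>q. q x) ` Q)"
    unfolding image_image using Q(2) x c unfolding sublinear_on_def by (auto intro!: image_cong)
  then show "Inf ((\<lambda>q. q (c *\<^sub>R x)) ` Q) = c * Inf ((\<lambda>q. q x) ` Q)"
    using cInf_image_mult_left[OF _ bdd[OF x] c] Q(1) by simp
qed

lemma chain_epigraph_sublinear_below_bounded:
  assumes C: "C \<in> chains (epigraph_on V ` sublinear_below V p)" "C \<noteq> {}"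
  shows "\<exists>U\<in>epigraph_on V ` sublinear_below V p. \<forall>X\<in>C. X \<subseteq> U"
proof -
  define Q where "Q = {q \<in> sublinear_below V p. epigraph_on V q \<in> C}"
  have CQ: "\<forall>X\<in>C. \<exists>q\<in>Q. X = epigraph_on V q" using C(1) unfolding chains_def Q_def by auto
  then obtain q0 where q0: "q0 \<in> Q" using C(2) by blast
  have lower: "- p (- x) \<le> q x" if "q \<in> Q" "x \<in> V" for q x
    using that sublinear_on_minus_le[of q x] subspace_neg[OF V, of x]
    unfolding Q_def sublinear_below_def by force
  have bdd: "bdd_below ((\<lambda>q. q x) ` Q)" if "x \<in> V" for x
    unfolding bdd_below_def using lower that by blast
  define r where "r x = Inf ((\<lambda>q. q x) ` Q)" for x
  have r_le: "r x \<le> q x" if "q \<in> Q" "x \<in> V" for q x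
    unfolding r_def by (rule cInf_lower) (use that bdd in auto)
  have "sublinear_on V r"
    unfolding r_def
  proof (rule sublinear_on_Inf_chain)
    show "Q \<noteq> {}" using q0 by blast
    show "sublinear_on V q" if "q \<in> Q" for q using that unfolding Q_def sublinear_below_def by blast
    show "(\<forall>x\<in>V. q1 x \<le> q2 x) \<or> (\<forall>x\<in>V. q2 x \<le> q1 x)" if "q1 \<in> Q" "q2 \<in> Q" for q1 q2
    proof -
      have "epigraph_on V q1 \<subseteq> epigraph_on V q2 \<or> epigraph_on V q2 \<subseteq> epigraph_on V q1"
        using C(1) that unfolding chains_def chain_subset_def Q_def by blast
      then show ?thesis unfolding epigraph_on_subset_iff by blast
    qed
  qed (rule bdd)
  moreover have "r x \<le> p x" if "x \<in> V" for x
    using r_le[OF q0 that] q0 that unfolding Q_def sublinear_below_def by force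
  ultimately have "r \<in> sublinear_below V p" unfolding sublinear_below_def by blast
  moreover have "X \<subseteq> epigraph_on V r" if "X \<in> C" for X
  proof -
    obtain q where q: "q \<in> Q" "X = epigraph_on V q" using CQ \<open>X \<in> C\<close> by blast
    have "\<forall>x\<in>V. r x \<le> q x" using r_le[OF q(1)] by blast
    then show ?thesis unfolding q(2) epigraph_on_subset_iff .
  qed
  ultimately show ?thesis by blast
qed

lemma exists_minimal_sublinear_on_below:
  assumes p: "sublinear_on V p"
  obtains q where "sublinear_on V q" "\<forall>x\<in>V. q x \<le> p x"
    "\<And>r. sublinear_on V r \<Longrightarrow> \<forall>x\<in>V. r x \<le> q x \<Longrightarrow> \<forall>x\<in>V. q x \<le> r x"
proof -
  have "\<exists>M\<in>epigraph_on V ` sublinear_below V p. \<forall>X\<in>epigraph_on V ` sublinear_below V p. M \<subseteq> X \<longrightarrow> X = M"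
  proof (rule Zorn_Lemma2, intro ballI)
    fix C assume C: "C \<in> chains (epigraph_on V ` sublinear_below V p)"
    show "\<exists>U\<in>epigraph_on V ` sublinear_below V p. \<forall>X\<in>C. X \<subseteq> U"
    proof (cases "C = {}")
      case True
      have "p \<in> sublinear_below V p" using p unfolding sublinear_below_def by blast
      then show ?thesis using True by blast
    qed (rule chain_epigraph_sublinear_below_bounded[OF C])
  qed
  then obtain q where q: "q \<in> sublinear_below V p"
    and max: "\<And>r. r \<in> sublinear_below V p \<Longrightarrow> epigraph_on V q \<subseteq> epigraph_on V r \<Longrightarrow>
                  epigraph_on V r = epigraph_on V q"
    by blast
  show ?thesis
  proof
    show "sublinear_on V q" "\<forall>x\<in>V. q x \<le> p x" using q unfolding sublinear_below_def by auto
    show "\<forall>x\<in>V. q x \<le> r x" if r: "sublinear_on V r" "\<forall>x\<in>V. r x \<le> q x" for r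
    proof -
      have "r \<in> sublinear_below V p" using r q unfolding sublinear_below_def by force
      moreover have "epigraph_on V q \<subseteq> epigraph_on V r" unfolding epigraph_on_subset_iff by (rule r(2))
      ultimately have "epigraph_on V r \<subseteq> epigraph_on V q" using max by blast
      then show ?thesis unfolding epigraph_on_subset_iff .
    qed
  qed
qed

lemma bdd_below_ray_infimum:
  assumes q: "sublinear_on V q" and "x \<in> V" "y \<in> V"
  shows "bdd_below ((\<lambda>t. q (y + t *\<^sub>R x) - t * q x) ` {0..})"
proof -
  have "- q (- y) \<le> q (y + t *\<^sub>R x) - t * q x" if "t \<ge> 0" for t
  proof -
    have "q ((y + t *\<^sub>R x) + - y) \<le> q (y + t *\<^sub>R x) + q (- y)"
      using q assms(2,3) subspace_neg[OF V] subspace_add[OF V] subspace_scale[OF V]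
      unfolding sublinear_on_def by blast
    then show ?thesis using sublinear_on_scaleR_nonneg[OF q assms(2) that] by simp
  qed
  then show ?thesis unfolding bdd_below_def by auto
qed

lemma ray_infimum_le:
  "sublinear_on V q \<Longrightarrow> x \<in> V \<Longrightarrow> y \<in> V \<Longrightarrow> t \<ge> 0 \<Longrightarrow> ray_infimum q x y \<le> q (y + t *\<^sub>R x) - t * q x"
  unfolding ray_infimum_def by (rule cInf_lower) (auto intro: bdd_below_ray_infimum)

lemma ray_infimum_add_le:
  assumes q: "sublinear_on V q" and x: "x \<in> V" and y: "y \<in> V" and z: "z \<in> V"
  shows "ray_infimum q x (y + z) \<le> ray_infimum q x y + ray_infimum q x z"
  unfolding ray_infimum_def
proof (rule le_cInf_add)
  fix a b assume "a \<in> (\<lambda>t. q (y + t *\<^sub>R x) - t * q x) ` {0..}" "b \<in> (\<lambda>t. q (z + t *\<^sub>R x) - t * q x) ` {0..}"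
  then obtain s t where st: "s \<ge> 0" "t \<ge> 0" "a = q (y + s *\<^sub>R x) - s * q x" "b = q (z + t *\<^sub>R x) - t * q x"
    by auto
  have "ray_infimum q x (y + z) \<le> q ((y + z) + (s + t) *\<^sub>R x) - (s + t) * q x"
    using st by (intro ray_infimum_le q x subspace_add[OF V y z]) simp
  also have "(y + z) + (s + t) *\<^sub>R x = (y + s *\<^sub>R x) + (z + t *\<^sub>R x)" by (simp add: algebra_simps)
  also have "q ((y + s *\<^sub>R x) + (z + t *\<^sub>R x)) \<le> q (y + s *\<^sub>R x) + q (z + t *\<^sub>R x)"
    using q y z subspace_add[OF V] subspace_scale[OF V x] unfolding sublinear_on_def by blast
  finally show "Inf ((\<lambda>t. q ((y + z) + t *\<^sub>R x) - t * q x) ` {0..}) \<le> a + b"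
    using st unfolding ray_infimum_def by (simp add: algebra_simps)
qed (use bdd_below_ray_infimum[OF q x] y z in auto)

lemma ray_infimum_scaleR:
  assumes q: "sublinear_on V q" and x: "x \<in> V" and y: "y \<in> V" and c: "c > 0"
  shows "ray_infimum q x (c *\<^sub>R y) = c * ray_infimum q x y"
proof -
  have "t \<in> (\<lambda>s. c * s) ` {0..}" if "t \<ge> 0" for t
    by (rule image_eqI[of _ _ "t / c"]) (use c that in auto)
  then have "(\<lambda>s. c * s) ` {0..} = {0..}" using c by auto
  then have "(\<lambda>t. q (c *\<^sub>R y + t *\<^sub>R x) - t * q x) ` {0..}
      = (\<lambda>t. q (c *\<^sub>R y + t *\<^sub>R x) - t * q x) ` ((\<lambda>s. c * s) ` {0..})"
    by simp
  also have "\<dots> = (\<lambda>a. c * a) ` ((\<lambda>t. q (y + t *\<^sub>R x) - t * q x) ` {0..})"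
    unfolding image_image
  proof (rule image_cong[OF refl])
    fix s :: real
    have "c *\<^sub>R y + (c * s) *\<^sub>R x = c *\<^sub>R (y + s *\<^sub>R x)" by (simp add: algebra_simps)
    moreover have "q (c *\<^sub>R (y + s *\<^sub>R x)) = c * q (y + s *\<^sub>R x)"
      using q c y subspace_add[OF V] subspace_scale[OF V x] unfolding sublinear_on_def by blast
    ultimately show "q (c *\<^sub>R y + (c * s) *\<^sub>R x) - c * s * q x = c * (q (y + s *\<^sub>R x) - s * q x)"
      by (simp add: algebra_simps)
  qed
  finally show ?thesis
    unfolding ray_infimum_def using cInf_image_mult_left[OF _ bdd_below_ray_infimum[OF q x y] c] by simp
qed

lemma sublinear_on_ray_infimum: "sublinear_on V q \<Longrightarrow> x \<in> V \<Longrightarrow> sublinear_on V (ray_infimum q x)"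
  unfolding sublinear_on_def[of V "ray_infimum q x"] by (simp add: ray_infimum_add_le ray_infimum_scaleR)

text \<open>By minimality \<open>q\<close> lies below \<open>ray_infimum q x\<close>; evaluating at \<open>- x\<close> with \<open>t = 1\<close> gives
  \<open>q (- x) \<le> - q x\<close>.\<close>

lemma minimal_sublinear_on_odd:
  assumes q: "sublinear_on V q"
    and minimal: "\<And>r. sublinear_on V r \<Longrightarrow> \<forall>y\<in>V. r y \<le> q y \<Longrightarrow> \<forall>y\<in>V. q y \<le> r y"
    and x: "x \<in> V"
  shows "q (- x) = - q x"
proof -
  have "\<forall>y\<in>V. ray_infimum q x y \<le> q y" using ray_infimum_le[OF q x, of _ 0] by simp
  then have "q (- x) \<le> ray_infimum q x (- x)"
    using minimal[OF sublinear_on_ray_infimum[OF q x]] subspace_neg[OF V x] by blast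
  also have "\<dots> \<le> q (- x + 1 *\<^sub>R x) - 1 * q x" by (rule ray_infimum_le[OF q x subspace_neg[OF V x]]) simp
  also have "\<dots> = - q x" using sublinear_on_zero[OF q] by simp
  finally show ?thesis using sublinear_on_minus_le[OF q x] by linarith
qed

lemma exists_linear_functional_below_sublinear:
  assumes "sublinear_on V p"
  obtains \<Lambda> where "linear_functional_on V \<Lambda>" "\<forall>x\<in>V. \<Lambda> x \<le> p x"
proof -
  obtain q where q: "sublinear_on V q" "\<forall>x\<in>V. q x \<le> p x"
    and minimal: "\<And>r. sublinear_on V r \<Longrightarrow> \<forall>x\<in>V. r x \<le> q x \<Longrightarrow> \<forall>x\<in>V. q x \<le> r x"
    using exists_minimal_sublinear_on_below[OF assms] by blast
  have "linear_functional_on V q"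
    using sublinear_on_odd_imp_linear[OF q(1) minimal_sublinear_on_odd[OF q(1) minimal]] .
  then show thesis using q(2) that by blast
qed

context
  fixes W p l
  assumes W: "subspace W" "W \<subseteq> V" and p: "sublinear_on V p"
    and l: "linear_functional_on W l" and l_le: "\<forall>x\<in>W. l x \<le> p x"
begin

lemma bdd_below_infimal_convolution:
  assumes x: "x \<in> V"
  shows "bdd_below ((\<lambda>w. p (x - w) + l w) ` W)"
proof -
  have "- p (- x) \<le> p (x - w) + l w" if w: "w \<in> W" for w
  proof -
    have "l (- w) = - l w" using l subspace_neg[OF W(1) w] w unfolding linear_functional_on_def
      by (metis mult_minus1 scaleR_minus1_left)
    then have "- p (- w) \<le> l w" using l_le subspace_neg[OF W(1) w] by force
    moreover have "p ((x - w) + - x) \<le> p (x - w) + p (- x)"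
      using p subspace_diff[OF V x] subspace_neg[OF V x] W(2) w unfolding sublinear_on_def by blast
    ultimately show ?thesis by simp
  qed
  then show ?thesis unfolding bdd_below_def by auto
qed

lemma infimal_convolution_on_le: "x \<in> V \<Longrightarrow> w \<in> W \<Longrightarrow> infimal_convolution_on W p l x \<le> p (x - w) + l w"
  unfolding infimal_convolution_on_def by (rule cInf_lower) (auto intro: bdd_below_infimal_convolution)

lemma infimal_convolution_on_add_le:
  assumes x: "x \<in> V" and y: "y \<in> V"
  shows "infimal_convolution_on W p l (x + y) \<le> infimal_convolution_on W p l x + infimal_convolution_on W p l y"
  unfolding infimal_convolution_on_def
proof (rule le_cInf_add)
  fix a b assume "a \<in> (\<lambda>w. p (x - w) + l w) ` W" "b \<in> (\<lambda>w. p (y - w) + l w) ` W"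
  then obtain w1 w2 where w: "w1 \<in> W" "w2 \<in> W" "a = p (x - w1) + l w1" "b = p (y - w2) + l w2" by auto
  have "Inf ((\<lambda>w. p (x + y - w) + l w) ` W) \<le> p (x + y - (w1 + w2)) + l (w1 + w2)"
    using infimal_convolution_on_le[OF subspace_add[OF V x y] subspace_add[OF W(1) w(1,2)]]
    unfolding infimal_convolution_on_def .
  also have "x + y - (w1 + w2) = (x - w1) + (y - w2)" by (simp add: algebra_simps)
  also have "p ((x - w1) + (y - w2)) \<le> p (x - w1) + p (y - w2)"
    using p subspace_diff[OF V] x y w(1,2) W(2) unfolding sublinear_on_def by blast
  finally show "Inf ((\<lambda>w. p (x + y - w) + l w) ` W) \<le> a + b"
    using w l unfolding linear_functional_on_def by (simp add: algebra_simps)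
qed (use subspace_0[OF W(1)] bdd_below_infimal_convolution x y in auto)

lemma infimal_convolution_on_scaleR:
  assumes x: "x \<in> V" and c: "c > 0"
  shows "infimal_convolution_on W p l (c *\<^sub>R x) = c * infimal_convolution_on W p l x"
proof -
  have "w \<in> (\<lambda>w. c *\<^sub>R w) ` W" if "w \<in> W" for w
    by (rule image_eqI[of _ _ "(1 / c) *\<^sub>R w"]) (use c that subspace_scale[OF W(1)] in auto)
  then have "(\<lambda>w. c *\<^sub>R w) ` W = W" using subspace_scale[OF W(1)] by auto
  then have "(\<lambda>w. p (c *\<^sub>R x - w) + l w) ` W = (\<lambda>w. p (c *\<^sub>R x - w) + l w) ` ((\<lambda>w. c *\<^sub>R w) ` W)"
    by simp
  also have "\<dots> = (\<lambda>a. c * a) ` ((\<lambda>w. p (x - w) + l w) ` W)"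
    unfolding image_image
  proof (rule image_cong[OF refl])
    fix w assume w: "w \<in> W"
    have "c *\<^sub>R x - c *\<^sub>R w = c *\<^sub>R (x - w)" by (simp add: algebra_simps)
    moreover have "p (c *\<^sub>R (x - w)) = c * p (x - w)"
      using p c subspace_diff[OF V x] w W(2) unfolding sublinear_on_def by blast
    ultimately show "p (c *\<^sub>R x - c *\<^sub>R w) + l (c *\<^sub>R w) = c * (p (x - w) + l w)"
      using l w unfolding linear_functional_on_def by (simp add: algebra_simps)
  qed
  finally show ?thesis
    unfolding infimal_convolution_on_def
    using cInf_image_mult_left[OF _ bdd_below_infimal_convolution[OF x] c] subspace_0[OF W(1)] by auto
qed

lemma sublinear_on_infimal_convolution: "sublinear_on V (infimal_convolution_on W p l)"
  unfolding sublinear_on_def by (simp add: infimal_convolution_on_add_le infimal_convolution_on_scaleR)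

text \<open>A linear functional below the infimal convolution agrees with \<open>l\<close> on \<open>W\<close>: it is \<open>\<le> l\<close> there
  (take \<open>w = x\<close>), and both are odd.\<close>

theorem Hahn_Banach_sublinear:
  obtains \<Lambda> where "linear_functional_on V \<Lambda>" "\<forall>w\<in>W. \<Lambda> w = l w" "\<forall>x\<in>V. \<Lambda> x \<le> p x"
proof -
  obtain \<Lambda> where \<Lambda>: "linear_functional_on V \<Lambda>" "\<forall>x\<in>V. \<Lambda> x \<le> infimal_convolution_on W p l x"
    using exists_linear_functional_below_sublinear[OF sublinear_on_infimal_convolution] by blast
  have odd: "f (- x) = - f x" if "linear_functional_on U f" "x \<in> U" for U f and x :: 'a
    using that unfolding linear_functional_on_def by (metis mult_minus1 scaleR_minus1_left)
  have \<Lambda>_le: "\<Lambda> w \<le> l w" if "w \<in> W" for w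
    using \<Lambda>(2) infimal_convolution_on_le[of w w] W(2) that sublinear_on_zero[OF p] by force
  show thesis
  proof
    show "linear_functional_on V \<Lambda>" by (rule \<Lambda>(1))
    show "\<forall>w\<in>W. \<Lambda> w = l w"
      using \<Lambda>_le subspace_neg[OF W(1)] odd[OF \<Lambda>(1)] odd[OF l] W(2) by (smt (verit) subsetD)
    show "\<forall>x\<in>V. \<Lambda> x \<le> p x"
      using \<Lambda>(2) infimal_convolution_on_le[OF _ subspace_0[OF W(1)]] odd[OF l subspace_0[OF W(1)]] by force
  qed
qed

end

end

section \<open>Extending bounded functionals from \<open>\<S>\<^sub>0\<^sub>0\<close> to tempered distributions\<close>

instantiation "fun" :: (type, real_vector) real_vector
begin
definition scaleR_fun :: "real \<Rightarrow> ('a \<Rightarrow> 'b) \<Rightarrow> 'a \<Rightarrow> 'b" where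
  "scaleR_fun r f = (\<lambda>x. r *\<^sub>R f x)"
instance by standard (simp_all add: scaleR_fun_def fun_eq_iff scaleR_add_right scaleR_add_left)
end

lemma scaleR_fun_complex: "c *\<^sub>R f = (\<lambda>x. complex_of_real c * f x)" for f :: "'a \<Rightarrow> complex"
  by (simp add: scaleR_fun_def scaleR_conv_of_real fun_eq_iff)

lemma subspace_schwartz: "subspace (schwartz :: (real^'n::finite \<Rightarrow> complex) set)"
proof (rule subspaceI)
  show "0 \<in> (schwartz :: (real^'n \<Rightarrow> complex) set)"
    using zero_in_schwartz00 schwartz00_subset_schwartz unfolding zero_fun_def by blast
  show "f + g \<in> schwartz" if "f \<in> schwartz" "g \<in> schwartz" for f g :: "real^'n \<Rightarrow> complex"
    using schwartz_add[OF that] unfolding plus_fun_def .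
  show "c *\<^sub>R f \<in> schwartz" if "f \<in> schwartz" for c and f :: "real^'n \<Rightarrow> complex"
    using schwartz_cmult[OF that] unfolding scaleR_fun_complex .
qed

lemma subspace_schwartz00: "subspace (schwartz00 :: (real^'n::finite \<Rightarrow> complex) set)"
proof (rule subspaceI)
  show "0 \<in> (schwartz00 :: (real^'n \<Rightarrow> complex) set)"
    using zero_in_schwartz00 unfolding zero_fun_def .
  show "f + g \<in> schwartz00" if "f \<in> schwartz00" "g \<in> schwartz00" for f g :: "real^'n \<Rightarrow> complex"
    using schwartz00_add[OF that] unfolding plus_fun_def .
  show "c *\<^sub>R f \<in> schwartz00" if "f \<in> schwartz00" for c and f :: "real^'n \<Rightarrow> complex"
    using schwartz00_cmult[OF that] unfolding scaleR_fun_complex .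
qed

lemma sublinear_on_schwartz_seminorm_sum:
  assumes "C \<ge> 0"
  shows "sublinear_on schwartz (\<lambda>g. C * schwartz_seminorm_sum N g)"
  unfolding sublinear_on_def
proof (intro conjI ballI allI impI)
  show "C * schwartz_seminorm_sum N (f + g) \<le> C * schwartz_seminorm_sum N f + C * schwartz_seminorm_sum N g"
    if "f \<in> schwartz" "g \<in> schwartz" for f g
    using mult_left_mono[OF schwartz_seminorm_sum_add[OF that] assms]
    unfolding plus_fun_def by (simp add: distrib_left)
  show "C * schwartz_seminorm_sum N (c *\<^sub>R f) = c * (C * schwartz_seminorm_sum N f)"
    if "f \<in> schwartz" "c > 0" for f and c :: real
    using that unfolding scaleR_fun_complex by (simp add: schwartz_seminorm_sum_cmult)
qed

text \<open>The complex-linear functional whose real part is the real-linear functional \<open>\<Lambda>\<close>.\<close>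

definition complexify :: "((real^'n::finite \<Rightarrow> complex) \<Rightarrow> real) \<Rightarrow> (real^'n \<Rightarrow> complex) \<Rightarrow> complex" where
  "complexify \<Lambda> g = Complex (\<Lambda> g) (- \<Lambda> (\<lambda>x. \<i> * g x))"

context
  fixes \<Lambda> :: "(real^'n::finite \<Rightarrow> complex) \<Rightarrow> real"
  assumes \<Lambda>: "linear_functional_on schwartz \<Lambda>"
begin

lemma complexify_add:
  assumes f: "f \<in> schwartz" and g: "g \<in> schwartz"
  shows "complexify \<Lambda> (\<lambda>x. f x + g x) = complexify \<Lambda> f + complexify \<Lambda> g"
proof -
  have "(\<lambda>x. \<i> * (f x + g x)) = (\<lambda>x. \<i> * f x) + (\<lambda>x. \<i> * g x)" by (simp add: fun_eq_iff algebra_simps)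
  then show ?thesis
    using \<Lambda> f g schwartz_cmult[OF f, of \<i>] schwartz_cmult[OF g, of \<i>]
    unfolding complexify_def linear_functional_on_def by (simp add: complex_eq_iff plus_fun_def)
qed

lemma complexify_cmult:
  assumes f: "f \<in> schwartz"
  shows "complexify \<Lambda> (\<lambda>x. c * f x) = c * complexify \<Lambda> f"
proof -
  let ?if = "\<lambda>x. \<i> * f x"
  have if_s: "?if \<in> schwartz" using schwartz_cmult[OF f] .
  have add: "\<And>h k. h \<in> schwartz \<Longrightarrow> k \<in> schwartz \<Longrightarrow> \<Lambda> (h + k) = \<Lambda> h + \<Lambda> k"
    and scale: "\<And>h r. h \<in> schwartz \<Longrightarrow> \<Lambda> (r *\<^sub>R h) = r * \<Lambda> h"
    using \<Lambda> unfolding linear_functional_on_def by auto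
  have mem: "r *\<^sub>R h \<in> schwartz" if "h \<in> schwartz" for r h
    using subspace_scale[OF subspace_schwartz that] .
  have "(\<lambda>x. c * f x) = Re c *\<^sub>R f + Im c *\<^sub>R ?if"
    by (simp add: fun_eq_iff scaleR_fun_def scaleR_conv_of_real algebra_simps complex_eq_iff)
  then have re: "\<Lambda> (\<lambda>x. c * f x) = Re c * \<Lambda> f + Im c * \<Lambda> ?if"
    by (simp only: add[OF mem[OF f] mem[OF if_s]] scale[OF f] scale[OF if_s])
  have "(\<lambda>x. \<i> * (c * f x)) = Re c *\<^sub>R ?if + (- Im c) *\<^sub>R f"
    by (simp add: fun_eq_iff scaleR_fun_def scaleR_conv_of_real algebra_simps complex_eq_iff)
  then have im: "\<Lambda> (\<lambda>x. \<i> * (c * f x)) = Re c * \<Lambda> ?if - Im c * \<Lambda> f"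
    by (simp only: add[OF mem[OF if_s] mem[OF f]] scale[OF f] scale[OF if_s])
  show ?thesis unfolding complexify_def by (simp add: re im complex_eq_iff algebra_simps)
qed

text \<open>Rotating \<open>g\<close> by a unimodular \<open>u\<close> makes \<open>complexify \<Lambda> (u g)\<close> real and equal to \<open>|complexify \<Lambda> g|\<close>.\<close>

lemma norm_complexify_le:
  assumes le: "\<forall>g\<in>schwartz. \<Lambda> g \<le> C * schwartz_seminorm_sum N g" and "C \<ge> 0" and g: "g \<in> schwartz"
  shows "norm (complexify \<Lambda> g) \<le> C * schwartz_seminorm_sum N g"
proof (cases "complexify \<Lambda> g = 0")
  case True then show ?thesis using schwartz_seminorm_sum_nonneg[OF g] \<open>C \<ge> 0\<close> by simp
next
  case False
  define u where "u = cnj (complexify \<Lambda> g) / norm (complexify \<Lambda> g)"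
  have "complexify \<Lambda> (\<lambda>x. u * g x) = u * complexify \<Lambda> g" by (rule complexify_cmult[OF g])
  also have "\<dots> = norm (complexify \<Lambda> g)"
    unfolding u_def using False by (simp add: complex_norm_square[symmetric] power2_eq_square field_simps)
  finally have "norm (complexify \<Lambda> g) = \<Lambda> (\<lambda>x. u * g x)" unfolding complexify_def by (simp add: complex_eq_iff)
  also have "\<dots> \<le> C * schwartz_seminorm_sum N (\<lambda>x. u * g x)" using le schwartz_cmult[OF g] by blast
  also have "\<dots> = C * schwartz_seminorm_sum N g"
    unfolding schwartz_seminorm_sum_cmult[OF g] u_def using False by (simp add: norm_divide)
  finally show ?thesis .
qed

end

theorem tempered_distribution_extends_schwartz00:
  fixes L :: "(real^'n::finite \<Rightarrow> complex) \<Rightarrow> complex"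
  assumes add: "\<forall>f\<in>schwartz00. \<forall>g\<in>schwartz00. L (\<lambda>x. f x + g x) = L f + L g"
    and cmult: "\<forall>c. \<forall>f\<in>schwartz00. L (\<lambda>x. c * f x) = c * L f"
    and bound: "\<forall>g\<in>schwartz00. norm (L g) \<le> C * schwartz_seminorm_sum N g"
  shows "\<exists>T. tempered_distribution T \<and> (\<forall>g\<in>schwartz00. T g = L g)"
proof -
  define C' where "C' = max C 0"
  have C'0: "C' \<ge> 0" unfolding C'_def by simp
  have "linear_functional_on schwartz00 (\<lambda>g. Re (L g))"
    unfolding linear_functional_on_def plus_fun_def scaleR_fun_complex using add cmult by simp
  moreover have "\<forall>g\<in>schwartz00. Re (L g) \<le> C' * schwartz_seminorm_sum N g"
  proof
    fix g :: "real^'n \<Rightarrow> complex" assume g: "g \<in> schwartz00"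
    have "Re (L g) \<le> C * schwartz_seminorm_sum N g" using bound g complex_Re_le_cmod order_trans by blast
    also have "\<dots> \<le> C' * schwartz_seminorm_sum N g"
      unfolding C'_def using g schwartz00_subset_schwartz schwartz_seminorm_sum_nonneg
      by (intro mult_right_mono) auto
    finally show "Re (L g) \<le> C' * schwartz_seminorm_sum N g" .
  qed
  ultimately obtain \<Lambda> where \<Lambda>: "linear_functional_on schwartz \<Lambda>"
      "\<forall>g\<in>schwartz00. \<Lambda> g = Re (L g)" "\<forall>g\<in>schwartz. \<Lambda> g \<le> C' * schwartz_seminorm_sum N g"
    using Hahn_Banach_sublinear[OF subspace_schwartz subspace_schwartz00 schwartz00_subset_schwartz
        sublinear_on_schwartz_seminorm_sum[OF C'0]] by blast
  show ?thesis
  proof (intro exI conjI ballI)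
    show "tempered_distribution (complexify \<Lambda>)"
      unfolding tempered_distribution_def
      using complexify_add[OF \<Lambda>(1)] complexify_cmult[OF \<Lambda>(1)] norm_complexify_le[OF \<Lambda>(1,3) C'0] by blast
    fix g :: "real^'n \<Rightarrow> complex" assume g: "g \<in> schwartz00"
    have "\<Lambda> (\<lambda>x. \<i> * g x) = Re (\<i> * L g)" using \<Lambda>(2) schwartz00_cmult[OF g] cmult g by simp
    then show "complexify \<Lambda> g = L g" using \<Lambda>(2) g unfolding complexify_def by (simp add: complex_eq_iff)
  qed
qed

section \<open>Symbols of polynomial growth at the origin and at infinity\<close>

lemma max_powr_mult_power_le_1:
  fixes r L1 L2 :: real
  assumes "0 < r" "r \<le> 1" "0 \<le> L1" "0 \<le> L2" "L1 \<le> real N"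
  shows "max (r powr (- L1)) (r powr L2) * r ^ N \<le> 1"
proof -
  have "r powr L2 \<le> 1" "1 \<le> r powr (- L1)" using assms by (simp_all add: powr_le1 powr_minus_divide)
  then have "max (r powr (- L1)) (r powr L2) * r ^ N = r powr (real N - L1)"
    using assms by (simp add: powr_realpow[symmetric] powr_add[symmetric])
  also have "\<dots> \<le> 1" using assms by (simp add: powr_le1)
  finally show ?thesis .
qed

lemma max_powr_le_power:
  fixes r L1 L2 :: real
  assumes "1 \<le> r" "0 \<le> L1" "0 \<le> L2" "L2 \<le> real N"
  shows "max (r powr (- L1)) (r powr L2) \<le> r ^ N"
proof -
  have "r powr (- L1) \<le> 1" using assms ge_one_powr_ge_zero[of r L1] by (simp add: powr_minus inverse_le_1_iff)
  moreover have "r powr L2 \<le> r powr (real N)" using assms by (simp add: powr_mono)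
  ultimately show ?thesis using assms by (smt (verit) ge_one_powr_ge_zero powr_realpow)
qed

lemma power_bounds_of_powr_growth:
  fixes F :: "'a::real_normed_vector \<Rightarrow> 'b::real_normed_vector"
  assumes "0 \<le> L1" "0 \<le> L2"
    and growth: "\<forall>\<xi>. \<xi> \<noteq> 0 \<longrightarrow> norm (F \<xi>) \<le> C * max (norm \<xi> powr (- L1)) (norm \<xi> powr L2)"
  obtains C' N1 N2 where "0 \<le> C'"
    "\<And>y. y \<noteq> 0 \<Longrightarrow> norm y \<le> 1 \<Longrightarrow> norm (F y) * norm y ^ N1 \<le> C'"
    "\<And>y. 1 \<le> norm y \<Longrightarrow> norm (F y) \<le> C' * norm y ^ N2"
proof -
  have bound: "norm (F y) \<le> \<bar>C\<bar> * max (norm y powr (- L1)) (norm y powr L2)" if "y \<noteq> 0" for y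
    using growth that by (smt (verit) abs_ge_self max.cobounded2 mult_right_mono powr_ge_zero)
  show thesis
  proof (rule that[of "\<bar>C\<bar>" "nat \<lceil>L1\<rceil>" "nat \<lceil>L2\<rceil>"])
    fix y :: 'a
    assume y: "y \<noteq> 0" "norm y \<le> 1"
    have "norm (F y) * norm y ^ nat \<lceil>L1\<rceil> \<le> \<bar>C\<bar> * (max (norm y powr (- L1)) (norm y powr L2) * norm y ^ nat \<lceil>L1\<rceil>)"
      using mult_right_mono[OF bound[OF y(1)], of "norm y ^ nat \<lceil>L1\<rceil>"] by (simp add: mult.assoc)
    also have "\<dots> \<le> \<bar>C\<bar>"
      using max_powr_mult_power_le_1[of "norm y" L1 L2 "nat \<lceil>L1\<rceil>"] assms(1,2) y
      by (simp add: mult_left_le)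
    finally show "norm (F y) * norm y ^ nat \<lceil>L1\<rceil> \<le> \<bar>C\<bar>" .
  next
    fix y :: 'a
    assume y: "1 \<le> norm y"
    then have "max (norm y powr (- L1)) (norm y powr L2) \<le> norm y ^ nat \<lceil>L2\<rceil>"
      using max_powr_le_power[of "norm y" L1 L2 "nat \<lceil>L2\<rceil>"] assms(1,2) by simp
    then show "norm (F y) \<le> \<bar>C\<bar> * norm y ^ nat \<lceil>L2\<rceil>"
      using bound[of y] y by (smt (verit) abs_ge_zero mult_left_mono norm_zero)
  qed simp
qed

lemma has_vector_derivative_0_of_quadratic_bound:
  fixes \<phi> :: "real \<Rightarrow> 'a::real_normed_vector"
  assumes "\<phi> 0 = 0" and bound: "\<And>t. t \<noteq> 0 \<Longrightarrow> \<bar>t\<bar> \<le> 1 \<Longrightarrow> norm (\<phi> t) \<le> K * t ^ 2"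
  shows "(\<phi> has_vector_derivative 0) (at 0)"
  unfolding has_vector_derivative_def has_derivative_iff_norm
proof (intro conjI)
  show "bounded_linear (\<lambda>x::real. x *\<^sub>R (0::'a))" by simp
  have "\<forall>\<^sub>F t in at 0. norm (norm (\<phi> t - \<phi> 0 - (t - 0) *\<^sub>R 0) / norm (t - 0)) \<le> \<bar>K\<bar> * \<bar>t\<bar>"
    unfolding eventually_at
  proof (intro exI[of _ 1] conjI ballI impI allI)
    fix t :: real assume t: "t \<noteq> 0 \<and> dist t 0 < 1"
    have "norm (\<phi> t) \<le> \<bar>K\<bar> * t ^ 2"
      using bound[of t] t by (smt (verit, best) abs_ge_self dist_real_def mult_right_mono zero_le_power2)
    then show "norm (norm (\<phi> t - \<phi> 0 - (t - 0) *\<^sub>R 0) / norm (t - 0)) \<le> \<bar>K\<bar> * \<bar>t\<bar>"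
      using t assms(1) by (simp add: divide_le_eq power2_eq_square abs_mult_self_eq mult.assoc[symmetric])
  qed simp
  moreover have "((\<lambda>t::real. \<bar>K\<bar> * \<bar>t\<bar>) \<longlongrightarrow> 0) (at 0)"
    by (auto intro!: tendsto_eq_intros)
  ultimately show "((\<lambda>t. norm (\<phi> t - \<phi> 0 - (t - 0) *\<^sub>R 0) / norm (t - 0)) \<longlongrightarrow> 0) (at 0)"
    by (rule Lim_null_comparison)
qed

lemma isCont_0_of_quadratic_bound:
  fixes F :: "'a::real_normed_vector \<Rightarrow> 'b::real_normed_vector"
  assumes "F 0 = 0" and bound: "\<And>y. y \<noteq> 0 \<Longrightarrow> norm y \<le> 1 \<Longrightarrow> norm (F y) \<le> K * norm y ^ 2"
  shows "isCont F 0"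
proof -
  have "\<forall>\<^sub>F y in at 0. norm (F y) \<le> \<bar>K\<bar> * norm y ^ 2"
    unfolding eventually_at
  proof (intro exI[of _ 1] conjI ballI impI allI)
    fix y :: 'a assume y: "y \<noteq> 0 \<and> dist y 0 < 1"
    show "norm (F y) \<le> \<bar>K\<bar> * norm y ^ 2"
      using bound[of y] y by (smt (verit, best) abs_ge_self dist_norm diff_zero mult_right_mono zero_le_power2)
  qed simp
  moreover have "((\<lambda>y::'a. \<bar>K\<bar> * norm y ^ 2) \<longlongrightarrow> 0) (at 0)"
    by (auto intro!: tendsto_eq_intros)
  ultimately have "(F \<longlongrightarrow> 0) (at 0)" by (rule Lim_null_comparison)
  then show ?thesis unfolding isCont_def using assms(1) by simp
qed

abbreviation symbol_mult :: "(real^'n::finite \<Rightarrow> complex) \<Rightarrow> (real^'n \<Rightarrow> complex) \<Rightarrow> real^'n \<Rightarrow> complex" where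
  "symbol_mult m g \<equiv> (\<lambda>\<xi>. if \<xi> = 0 then 0 else m \<xi> * g \<xi>)"

context
  fixes m :: "real^'n::finite \<Rightarrow> complex"
  assumes m_smooth: "smooth_fun_on (UNIV - {0}) m"
    and m_growth: "\<forall>ds. \<exists>L1 L2 C. L1 \<ge> 0 \<and> L2 \<ge> 0 \<and>
        (\<forall>\<xi>. \<xi> \<noteq> 0 \<longrightarrow> norm (dpart ds m \<xi>) \<le> C * max (norm \<xi> powr (- L1)) (norm \<xi> powr L2))"
begin

lemma dpart_symbol_power_bounds:
  obtains C N1 N2 where "0 \<le> C"
    "\<And>y. y \<noteq> 0 \<Longrightarrow> norm y \<le> 1 \<Longrightarrow> norm (dpart a m y) * norm y ^ N1 \<le> C"
    "\<And>y. 1 \<le> norm y \<Longrightarrow> norm (dpart a m y) \<le> C * norm y ^ N2"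
  using m_growth power_bounds_of_powr_growth by metis

lemma dpart_symbol_mult_leibniz:
  assumes "smooth_fun_on UNIV g" "y \<noteq> 0"
  shows "dpart ds (symbol_mult m g) y = leibniz_sum m g (leibniz_splits ds) y"
proof -
  have U: "open (UNIV - {0::real^'n})" by auto
  have "dpart ds (symbol_mult m g) y = dpart ds (\<lambda>y. m y * g y) y"
    by (rule dpart_cong_open[OF U]) (use assms(2) in auto)
  also have "\<dots> = leibniz_sum m g (leibniz_splits ds) y"
    by (rule dpart_mult_open[OF U m_smooth smooth_fun_on_subset[OF assms(1)]]) (use assms(2) in auto)
  finally show ?thesis .
qed

lemma norm_dpart_symbol_mult_le:
  assumes "g \<in> schwartz" "y \<noteq> 0"
  shows "norm (dpart ds (symbol_mult m g) y)
           \<le> (\<Sum>e\<leftarrow>leibniz_splits ds. norm (dpart (fst e) m y) * norm (dpart (snd e) g y))"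
  using norm_leibniz_sum_le[of m g "leibniz_splits ds" y]
  unfolding dpart_symbol_mult_leibniz[OF schwartz_imp_smooth[OF assms(1)] assms(2)] by (simp add: split_def)

text \<open>Near the origin the flatness of \<open>g\<close> beats the singularity of \<open>m\<close>.\<close>

lemma leibniz_term_near_0:
  "\<exists>C N. \<forall>g\<in>schwartz00. \<forall>y. y \<noteq> 0 \<and> norm y \<le> 1 \<longrightarrow>
     norm (dpart a m y) * norm (dpart b g y) \<le> C * schwartz_seminorm_sum N g * norm y ^ 2"
proof -
  obtain C N1 N2 where "0 \<le> C"
    and near: "\<And>y. y \<noteq> 0 \<Longrightarrow> norm y \<le> 1 \<Longrightarrow> norm (dpart a m y) * norm y ^ N1 \<le> C"
    using dpart_symbol_power_bounds by metis
  let ?C = "C * real CARD('n) ^ (N1 + 2)" and ?N = "N1 + 2 + length b"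
  have "norm (dpart a m y) * norm (dpart b g y) \<le> ?C * schwartz_seminorm_sum ?N g * norm y ^ 2"
    if g: "g \<in> schwartz00" and y: "y \<noteq> 0" "norm y \<le> 1" for g y
  proof -
    have S: "0 \<le> schwartz_seminorm_sum ?N g"
      using g schwartz00_subset_schwartz schwartz_seminorm_sum_nonneg by blast
    have "norm (dpart a m y) * norm (dpart b g y)
        \<le> norm (dpart a m y) * (real CARD('n) ^ (N1 + 2) * norm y ^ (N1 + 2) * schwartz_seminorm_sum ?N g)"
      using schwartz00_dpart_decay[OF g, of b y "N1 + 2"] by (intro mult_left_mono) simp_all
    also have "\<dots> = (norm (dpart a m y) * norm y ^ N1) * (real CARD('n) ^ (N1 + 2) * schwartz_seminorm_sum ?N g) * norm y ^ 2"
      by (simp add: power_add power2_eq_square ac_simps)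
    also have "\<dots> \<le> C * (real CARD('n) ^ (N1 + 2) * schwartz_seminorm_sum ?N g) * norm y ^ 2"
      using near[OF y] S by (intro mult_right_mono) simp_all
    finally show ?thesis by (simp add: mult.assoc)
  qed
  then show ?thesis by blast
qed

text \<open>At infinity the decay of \<open>g\<close> beats the polynomial growth of \<open>m\<close>.\<close>

lemma leibniz_term_far:
  "\<exists>C N. \<forall>g\<in>schwartz. \<forall>y. 1 \<le> norm y \<longrightarrow>
     (1 + norm y) ^ k * (norm (dpart a m y) * norm (dpart b g y)) \<le> C * schwartz_seminorm_sum N g"
proof -
  obtain C N1 N2 where C: "0 \<le> C" and far: "\<And>y. 1 \<le> norm y \<Longrightarrow> norm (dpart a m y) \<le> C * norm y ^ N2"
    using dpart_symbol_power_bounds by metis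
  let ?N = "k + N2 + length b"
  have "(1 + norm y) ^ k * (norm (dpart a m y) * norm (dpart b g y)) \<le> C * schwartz_seminorm_sum ?N g"
    if g: "g \<in> schwartz" and y: "1 \<le> norm y" for g y
  proof -
    have "norm (dpart a m y) \<le> C * (1 + norm y) ^ N2"
      using far[OF y] C by (smt (verit) mult_left_mono norm_ge_zero power_mono)
    then have "(1 + norm y) ^ k * (norm (dpart a m y) * norm (dpart b g y))
        \<le> (1 + norm y) ^ k * (C * (1 + norm y) ^ N2 * norm (dpart b g y))"
      by (simp add: mult_left_mono mult_right_mono)
    also have "\<dots> = C * ((1 + norm y) ^ (k + N2) * norm (dpart b g y))"
      by (simp add: power_add ac_simps)
    also have "\<dots> \<le> C * schwartz_seminorm_sum ?N g"
      using schwartz_seminorm_upper[OF g, of y "k + N2" b] schwartz_seminorm_le_sum[OF g, of "k + N2" ?N b] C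
      by (intro mult_left_mono) simp_all
    finally show ?thesis .
  qed
  then show ?thesis by blast
qed

lemma dpart_symbol_mult_near_0:
  "\<exists>C N. \<forall>g\<in>schwartz00. \<forall>y. y \<noteq> 0 \<and> norm y \<le> 1 \<longrightarrow>
     norm (dpart ds (symbol_mult m g) y) \<le> C * schwartz_seminorm_sum N g * norm y ^ 2"
proof -
  let ?Z = "{(g, y). g \<in> schwartz00 \<and> y \<noteq> 0 \<and> norm (y :: real^'n) \<le> 1}"
  let ?F = "\<lambda>e z. norm (dpart (fst e) m (snd z)) * norm (dpart (snd e) (fst z) (snd z)) / norm (snd z) ^ 2"
  have "\<exists>C N. \<forall>z\<in>?Z. (\<Sum>e\<leftarrow>leibniz_splits ds. ?F e z) \<le> C * schwartz_seminorm_sum N (fst z)"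
  proof (rule sum_list_schwartz_seminorm_bound)
    show "fst z \<in> schwartz" if "z \<in> ?Z" for z using that schwartz00_subset_schwartz by auto
    show "\<forall>e\<in>set (leibniz_splits ds). \<exists>C N. \<forall>z\<in>?Z. ?F e z \<le> C * schwartz_seminorm_sum N (fst z)"
    proof
      fix e :: "'n list \<times> 'n list"
      obtain C N where "\<forall>g\<in>schwartz00. \<forall>y. y \<noteq> 0 \<and> norm y \<le> 1 \<longrightarrow>
          norm (dpart (fst e) m y) * norm (dpart (snd e) g y) \<le> C * schwartz_seminorm_sum N g * norm y ^ 2"
        using leibniz_term_near_0 by blast
      then have "\<forall>z\<in>?Z. ?F e z \<le> C * schwartz_seminorm_sum N (fst z)" by (auto simp: divide_le_eq)
      then show "\<exists>C N. \<forall>z\<in>?Z. ?F e z \<le> C * schwartz_seminorm_sum N (fst z)" by blast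
    qed
  qed
  then obtain C N where CN: "\<forall>z\<in>?Z. (\<Sum>e\<leftarrow>leibniz_splits ds. ?F e z) \<le> C * schwartz_seminorm_sum N (fst z)"
    by blast
  have "norm (dpart ds (symbol_mult m g) y) \<le> C * schwartz_seminorm_sum N g * norm y ^ 2"
    if g: "g \<in> schwartz00" and y: "y \<noteq> 0 \<and> norm y \<le> 1" for g y
  proof -
    have "norm (dpart ds (symbol_mult m g) y) \<le> (\<Sum>e\<leftarrow>leibniz_splits ds. ?F e (g, y)) * norm y ^ 2"
      using norm_dpart_symbol_mult_le[of g y ds] g y schwartz00_subset_schwartz
      by (auto simp: sum_list_mult_const[symmetric])
    also have "\<dots> \<le> C * schwartz_seminorm_sum N g * norm y ^ 2"
      using CN g y by (intro mult_right_mono) auto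
    finally show ?thesis .
  qed
  then show ?thesis by blast
qed

lemma dpart_symbol_mult_far:
  "\<exists>C N. \<forall>g\<in>schwartz. \<forall>y. 1 \<le> norm y \<longrightarrow>
     (1 + norm y) ^ k * norm (dpart ds (symbol_mult m g) y) \<le> C * schwartz_seminorm_sum N g"
proof -
  let ?Z = "{(g, y). g \<in> schwartz \<and> 1 \<le> norm (y :: real^'n)}"
  let ?F = "\<lambda>e z. (1 + norm (snd z)) ^ k * (norm (dpart (fst e) m (snd z)) * norm (dpart (snd e) (fst z) (snd z)))"
  have "\<exists>C N. \<forall>z\<in>?Z. (\<Sum>e\<leftarrow>leibniz_splits ds. ?F e z) \<le> C * schwartz_seminorm_sum N (fst z)"
  proof (rule sum_list_schwartz_seminorm_bound)
    show "fst z \<in> schwartz" if "z \<in> ?Z" for z using that by auto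
    show "\<forall>e\<in>set (leibniz_splits ds). \<exists>C N. \<forall>z\<in>?Z. ?F e z \<le> C * schwartz_seminorm_sum N (fst z)"
      using leibniz_term_far by fastforce
  qed
  then obtain C N where CN: "\<forall>z\<in>?Z. (\<Sum>e\<leftarrow>leibniz_splits ds. ?F e z) \<le> C * schwartz_seminorm_sum N (fst z)"
    by blast
  have "(1 + norm y) ^ k * norm (dpart ds (symbol_mult m g) y) \<le> C * schwartz_seminorm_sum N g"
    if g: "g \<in> schwartz" and y: "1 \<le> norm y" for g y
  proof -
    have "y \<noteq> 0" using y by auto
    then have "(1 + norm y) ^ k * norm (dpart ds (symbol_mult m g) y) \<le> (\<Sum>e\<leftarrow>leibniz_splits ds. ?F e (g, y))"
      using norm_dpart_symbol_mult_le[OF g] by (auto simp: sum_list_const_mult intro: mult_left_mono)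
    also have "\<dots> \<le> C * schwartz_seminorm_sum N g" using CN g y by auto
    finally show ?thesis .
  qed
  then show ?thesis by blast
qed

lemma dpart_symbol_mult_quadratic_near_0:
  assumes "g \<in> schwartz00"
  obtains K where "\<And>y. y \<noteq> 0 \<Longrightarrow> norm y \<le> 1 \<Longrightarrow> norm (dpart ds (symbol_mult m g) y) \<le> K * norm y ^ 2"
proof -
  obtain C N where "\<forall>g\<in>schwartz00. \<forall>y. y \<noteq> 0 \<and> norm y \<le> 1 \<longrightarrow>
      norm (dpart ds (symbol_mult m g) y) \<le> C * schwartz_seminorm_sum N g * norm y ^ 2"
    using dpart_symbol_mult_near_0 by blast
  then show thesis using assms by (intro that[of "C * schwartz_seminorm_sum N g"]) blast
qed

lemma dpart_symbol_mult_at_0: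
  assumes g: "g \<in> schwartz00"
  shows "dpart ds (symbol_mult m g) 0 = 0"
proof (induction ds)
  case (Cons i ds)
  obtain K where K: "\<And>y. y \<noteq> 0 \<Longrightarrow> norm y \<le> 1 \<Longrightarrow> norm (dpart ds (symbol_mult m g) y) \<le> K * norm y ^ 2"
    using dpart_symbol_mult_quadratic_near_0[OF g] by blast
  have "((\<lambda>t. dpart ds (symbol_mult m g) (0 + t *\<^sub>R axis i 1)) has_vector_derivative 0) (at 0)"
    by (rule has_vector_derivative_0_of_quadratic_bound) (use Cons K[of "_ *\<^sub>R axis i 1"] in \<open>auto simp: axis_eq_0_iff\<close>)
  then show ?case by (simp add: partial_dir_eqI)
qed simp

lemma smooth_symbol_mult:
  assumes g: "g \<in> schwartz00"
  shows "smooth_fun_on UNIV (symbol_mult m g)"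
proof (rule smooth_fun_onI)
  have gs: "g \<in> schwartz" using g schwartz00_subset_schwartz by blast
  have U: "open (UNIV - {0::real^'n})" by auto
  have leibniz: "\<And>y. y \<in> UNIV - {0} \<Longrightarrow> dpart ds (symbol_mult m g) y = leibniz_sum m g (leibniz_splits ds) y" for ds
    using dpart_symbol_mult_leibniz[OF schwartz_imp_smooth[OF gs]] by blast
  have g': "smooth_fun_on (UNIV - {0}) g" using smooth_fun_on_subset[OF schwartz_imp_smooth[OF gs]] by blast
  fix ds
  obtain K where K: "\<And>y. y \<noteq> 0 \<Longrightarrow> norm y \<le> 1 \<Longrightarrow> norm (dpart ds (symbol_mult m g) y) \<le> K * norm y ^ 2"
    using dpart_symbol_mult_quadratic_near_0[OF g] by blast
  have "isCont (dpart ds (symbol_mult m g)) x" for x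
  proof (cases "x = 0")
    case True
    then show ?thesis using isCont_0_of_quadratic_bound[OF dpart_symbol_mult_at_0[OF g] K] by simp
  next
    case False
    have "continuous_on (UNIV - {0}) (dpart ds (symbol_mult m g))"
      using continuous_on_leibniz_sum[OF m_smooth g'] by (rule continuous_on_eq) (use leibniz in auto)
    then show ?thesis using False continuous_on_eq_continuous_at[OF U] by auto
  qed
  then show "continuous_on UNIV (dpart ds (symbol_mult m g))" by (simp add: continuous_at_imp_continuous_on)
  fix i x
  show "\<exists>D. ((\<lambda>t. dpart ds (symbol_mult m g) (x + t *\<^sub>R axis i 1)) has_vector_derivative D) (at 0)"
  proof (cases "x = 0")
    case True
    have "((\<lambda>t. dpart ds (symbol_mult m g) (x + t *\<^sub>R axis i 1)) has_vector_derivative 0) (at 0)"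
      by (rule has_vector_derivative_0_of_quadratic_bound)
         (use True dpart_symbol_mult_at_0[OF g] K[of "_ *\<^sub>R axis i 1"] in \<open>auto simp: axis_eq_0_iff\<close>)
    then show ?thesis by blast
  next
    case False
    then show ?thesis
      using has_vector_derivative_line_cong_open[OF U _ leibniz leibniz_sum_has_partial[OF m_smooth g']] by blast
  qed
qed

lemma weighted_dpart_symbol_mult_near_0:
  "\<exists>C N. \<forall>g\<in>schwartz00. \<forall>y. norm y \<le> 1 \<longrightarrow>
     (1 + norm y) ^ k * norm (dpart ds (symbol_mult m g) y) \<le> C * schwartz_seminorm_sum N g"
proof -
  obtain C N where near: "\<forall>g\<in>schwartz00. \<forall>y. y \<noteq> 0 \<and> norm y \<le> 1 \<longrightarrow>
      norm (dpart ds (symbol_mult m g) y) \<le> C * schwartz_seminorm_sum N g * norm y ^ 2"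
    using dpart_symbol_mult_near_0 by blast
  have "(1 + norm y) ^ k * norm (dpart ds (symbol_mult m g) y) \<le> (2 ^ k * max C 0) * schwartz_seminorm_sum N g"
    if g: "g \<in> schwartz00" and y: "norm y \<le> 1" for g y
  proof -
    have S: "0 \<le> schwartz_seminorm_sum N g"
      using g schwartz00_subset_schwartz schwartz_seminorm_sum_nonneg by blast
    have "norm (dpart ds (symbol_mult m g) y) \<le> max C 0 * schwartz_seminorm_sum N g"
    proof (cases "y = 0")
      case True then show ?thesis using dpart_symbol_mult_at_0[OF g] S by simp
    next
      case False
      have "norm (dpart ds (symbol_mult m g) y) \<le> C * schwartz_seminorm_sum N g * norm y ^ 2"
        using near g y False by blast
      also have "\<dots> \<le> max C 0 * schwartz_seminorm_sum N g * norm y ^ 2"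
        using S by (intro mult_right_mono) simp_all
      also have "\<dots> \<le> max C 0 * schwartz_seminorm_sum N g"
        using S y by (intro mult_left_le) (simp_all add: power_le_one)
      finally show ?thesis .
    qed
    then have "(1 + norm y) ^ k * norm (dpart ds (symbol_mult m g) y) \<le> 2 ^ k * (max C 0 * schwartz_seminorm_sum N g)"
      using y by (intro mult_mono power_mono) simp_all
    then show ?thesis by (simp add: mult.assoc)
  qed
  then show ?thesis by blast
qed

lemma weighted_dpart_symbol_mult_bound:
  "\<exists>C N. \<forall>g\<in>schwartz00. \<forall>y. (1 + norm y) ^ k * norm (dpart ds (symbol_mult m g) y) \<le> C * schwartz_seminorm_sum N g"
proof -
  obtain C0 N0 where near: "\<forall>g\<in>schwartz00. \<forall>y. norm y \<le> 1 \<longrightarrow>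
      (1 + norm y) ^ k * norm (dpart ds (symbol_mult m g) y) \<le> C0 * schwartz_seminorm_sum N0 g"
    using weighted_dpart_symbol_mult_near_0 by blast
  obtain C1 N1 where far: "\<forall>g\<in>schwartz. \<forall>y. 1 \<le> norm y \<longrightarrow>
      (1 + norm y) ^ k * norm (dpart ds (symbol_mult m g) y) \<le> C1 * schwartz_seminorm_sum N1 g"
    using dpart_symbol_mult_far by blast
  have "(1 + norm y) ^ k * norm (dpart ds (symbol_mult m g) y)
          \<le> (max C0 0 + max C1 0) * schwartz_seminorm_sum (max N0 N1) g"
    if g: "g \<in> schwartz00" for g y
  proof -
    have gs: "g \<in> schwartz" using g schwartz00_subset_schwartz by blast
    have "C0 * schwartz_seminorm_sum N0 g \<le> max C0 0 * schwartz_seminorm_sum (max N0 N1) g"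
      "C1 * schwartz_seminorm_sum N1 g \<le> max C1 0 * schwartz_seminorm_sum (max N0 N1) g"
      by (intro schwartz_seminorm_sum_bound_mono gs; simp)+
    moreover have "0 \<le> max C0 0 * schwartz_seminorm_sum (max N0 N1) g" "0 \<le> max C1 0 * schwartz_seminorm_sum (max N0 N1) g"
      using schwartz_seminorm_sum_nonneg[OF gs] by simp_all
    moreover have "(1 + norm y) ^ k * norm (dpart ds (symbol_mult m g) y) \<le> C0 * schwartz_seminorm_sum N0 g \<or>
        (1 + norm y) ^ k * norm (dpart ds (symbol_mult m g) y) \<le> C1 * schwartz_seminorm_sum N1 g"
      using near far g gs by (meson nle_le)
    ultimately show ?thesis unfolding distrib_right by linarith
  qed
  then show ?thesis by blast
qed

theorem symbol_mult_schwartz00: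
  assumes g: "g \<in> schwartz00"
  shows "symbol_mult m g \<in> schwartz00"
proof -
  have "symbol_mult m g \<in> schwartz"
  proof (rule schwartzI[OF smooth_symbol_mult[OF g]])
    show "\<exists>B. \<forall>x. (1 + norm x) ^ k * norm (dpart ds (symbol_mult m g) x) \<le> B" for ds k
      using weighted_dpart_symbol_mult_bound[of k ds] g by blast
  qed
  then show ?thesis using dpart_symbol_mult_at_0[OF g] unfolding schwartz00_def by blast
qed

lemma schwartz_seminorm_sum_symbol_mult_le:
  "\<exists>C N. \<forall>g\<in>schwartz00. schwartz_seminorm_sum M (symbol_mult m g) \<le> C * schwartz_seminorm_sum N g"
proof -
  have "\<exists>C N. \<forall>g\<in>schwartz00. schwartz_seminorm k ds (symbol_mult m g) \<le> C * schwartz_seminorm_sum N g" for k ds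
  proof -
    obtain C N where "\<forall>g\<in>schwartz00. \<forall>y. (1 + norm y) ^ k * norm (dpart ds (symbol_mult m g) y)
        \<le> C * schwartz_seminorm_sum N g"
      using weighted_dpart_symbol_mult_bound by blast
    then have "\<forall>g\<in>schwartz00. schwartz_seminorm k ds (symbol_mult m g) \<le> C * schwartz_seminorm_sum N g"
      by (simp add: schwartz_seminorm_least)
    then show ?thesis by blast
  qed
  then have "\<exists>C N. \<forall>g\<in>schwartz00. (\<Sum>ds\<in>{ds. length ds \<le> M}. schwartz_seminorm k ds (symbol_mult m g))
               \<le> C * schwartz_seminorm_sum N g" for k
    using schwartz00_subset_schwartz by (intro sum_schwartz_seminorm_bound finite_lists_length_le_UNIV) auto
  then have "\<exists>C N. \<forall>g\<in>schwartz00. (\<Sum>k\<le>M. \<Sum>ds\<in>{ds. length ds \<le> M}. schwartz_seminorm k ds (symbol_mult m g))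
               \<le> C * schwartz_seminorm_sum N g"
    using schwartz00_subset_schwartz by (intro sum_schwartz_seminorm_bound) auto
  then show ?thesis unfolding schwartz_seminorm_sum_def[of M] .
qed

lemma tempered_distribution_symbol_mult_bound:
  assumes T: "tempered_distribution T"
  shows "\<exists>C N. \<forall>g\<in>schwartz00. norm (T (symbol_mult m g)) \<le> C * schwartz_seminorm_sum N g"
proof -
  obtain CT NT where CT: "\<forall>f\<in>schwartz. norm (T f) \<le> CT * schwartz_seminorm_sum NT f"
    using T unfolding tempered_distribution_def by blast
  obtain C N where CN: "\<forall>g\<in>schwartz00. schwartz_seminorm_sum NT (symbol_mult m g) \<le> C * schwartz_seminorm_sum N g"
    using schwartz_seminorm_sum_symbol_mult_le by blast
  have "norm (T (symbol_mult m g)) \<le> (max CT 0 * C) * schwartz_seminorm_sum N g" if g: "g \<in> schwartz00" for g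
  proof -
    have h: "symbol_mult m g \<in> schwartz" using symbol_mult_schwartz00[OF g] schwartz00_subset_schwartz by blast
    have "norm (T (symbol_mult m g)) \<le> CT * schwartz_seminorm_sum NT (symbol_mult m g)"
      using CT h by blast
    also have "\<dots> \<le> max CT 0 * schwartz_seminorm_sum NT (symbol_mult m g)"
      by (rule schwartz_seminorm_sum_bound_mono[OF h order_refl])
    also have "\<dots> \<le> max CT 0 * (C * schwartz_seminorm_sum N g)" using CN g by (intro mult_left_mono) auto
    finally show ?thesis by (simp add: mult.assoc)
  qed
  then show ?thesis by blast
qed

lemma tempered_distribution_symbol_mult_extends:
  assumes T: "tempered_distribution T"
  shows "\<exists>T'. tempered_distribution T' \<and> (\<forall>g\<in>schwartz00. T' g = T (symbol_mult m g))"
proof -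
  have mult_in: "symbol_mult m g \<in> schwartz" if "g \<in> schwartz00" for g
    using symbol_mult_schwartz00[OF that] schwartz00_subset_schwartz by blast
  obtain C N where bound: "\<forall>g\<in>schwartz00. norm (T (symbol_mult m g)) \<le> C * schwartz_seminorm_sum N g"
    using tempered_distribution_symbol_mult_bound[OF T] by blast
  have T_add: "\<forall>f\<in>schwartz. \<forall>g\<in>schwartz. T (\<lambda>x. f x + g x) = T f + T g"
    and T_cmult: "\<forall>c. \<forall>f\<in>schwartz. T (\<lambda>x. c * f x) = c * T f"
    using T unfolding tempered_distribution_def by blast+
  have "symbol_mult m (\<lambda>x. f x + g x) = (\<lambda>x. symbol_mult m f x + symbol_mult m g x)" for f g
    by (simp add: fun_eq_iff distrib_left)
  moreover have "symbol_mult m (\<lambda>x. c * f x) = (\<lambda>x. c * symbol_mult m f x)" for c f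
    by (simp add: fun_eq_iff mult.left_commute)
  ultimately show ?thesis
    using T_add T_cmult mult_in by (intro tempered_distribution_extends_schwartz00[OF _ _ bound]) simp_all
qed

end

theorem proposition1:
  fixes m :: "real^'n::finite \<Rightarrow> complex"
  assumes smooth: "smooth_fun_on (UNIV - {0}) m"
    and growth: "\<forall>ds. \<exists>L1 L2 C. L1 \<ge> 0 \<and> L2 \<ge> 0 \<and>
        (\<forall>\<xi>. \<xi> \<noteq> 0 \<longrightarrow> norm (dpart ds m \<xi>) \<le> C * max (norm \<xi> powr (- L1)) (norm \<xi> powr L2))"
  shows "(\<forall>g\<in>schwartz00. (\<lambda>\<xi>. if \<xi> = 0 then 0 else m \<xi> * g \<xi>) \<in> schwartz00) \<and>
         (\<forall>T. tempered_distribution T \<longrightarrow>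
            (\<exists>C N. \<forall>g\<in>schwartz00.
               norm (T (\<lambda>\<xi>. if \<xi> = 0 then 0 else m \<xi> * g \<xi>)) \<le> C * schwartz_seminorm_sum N g) \<and>
            (\<exists>T'. tempered_distribution T' \<and>
               (\<forall>g\<in>schwartz00. T' g = T (\<lambda>\<xi>. if \<xi> = 0 then 0 else m \<xi> * g \<xi>))))"
  using symbol_mult_schwartz00[OF smooth growth]
    tempered_distribution_symbol_mult_bound[OF smooth growth]
    tempered_distribution_symbol_mult_extends[OF smooth growth]
  by blast

end
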